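(* Let $N\ge2$, $\bar\psi>0$ and $h'(0)>0$ be constants. For $\epsilon>0$ set $\lambda(\xi)=\sqrt{\bar\psi^2|\xi|^2+\bar\psi h'(0)-\frac14\epsilon^2}$ and $\lambda_\pm=-\frac12\pm\frac{i}{\epsilon}\lambda$. Let $\theta\in C^\infty(\mathbb{R})$ with $\mathrm{supp}\,\theta\subset[\frac16,3]$ and $\theta=1$ on $[\frac56,\frac{12}5]$. For $k\in\mathbb{Z}$, $t\ge0$, $\tau>0$, $z\in\mathbb{R}^N$ define $$I_{1,k}(t,\tau,z)=\int_{\mathbb{R}^N}e^{i\xi\cdot z}\theta(2^{-k}|\xi|)\frac{e^{-\frac12t}e^{i\tau\lambda}}{\lambda_+-\lambda_-}\,d\xi.$$ Then there is a constant $C>0$ independent of $k$ and $\epsilon$ such that, for $\epsilon$ small enough (possibly depending on $k$), $$|I_{1,k}(t,\tau,z)|\le\epsilon C2^{(N-1)k}\max\{1,2^{-k}\}e^{-\frac12t}\min\Big\{\frac{2^k}{2^k+1},\tau^{-\frac12}\Big\}.$$ *)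

theory Defs
  imports "HOL-Analysis.Analysis"
begin

definition smooth_real :: "(real \<Rightarrow> real) \<Rightarrow> bool" where
  "smooth_real f \<longleftrightarrow> (\<forall>n. \<forall>x. ((deriv ^^ n) f) differentiable (at x))"

text \<open>lambda(xi) = sqrt(psi^2 |xi|^2 + psi h'(0) - eps^2/4); h0 stands for h'(0).\<close>
definition lam :: "real \<Rightarrow> real \<Rightarrow> real \<Rightarrow> 'a::real_normed_vector \<Rightarrow> real" where
  "lam psi h0 eps xi = sqrt (psi\<^sup>2 * (norm xi)\<^sup>2 + psi * h0 - eps\<^sup>2 / 4)"

definition lam_plus :: "real \<Rightarrow> real \<Rightarrow> real \<Rightarrow> 'a::real_normed_vector \<Rightarrow> complex" where
  "lam_plus psi h0 eps xi = - 1/2 + (\<i> / complex_of_real eps) * complex_of_real (lam psi h0 eps xi)"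

definition lam_minus :: "real \<Rightarrow> real \<Rightarrow> real \<Rightarrow> 'a::real_normed_vector \<Rightarrow> complex" where
  "lam_minus psi h0 eps xi = - 1/2 - (\<i> / complex_of_real eps) * complex_of_real (lam psi h0 eps xi)"

definition I1k :: "real \<Rightarrow> real \<Rightarrow> (real \<Rightarrow> real) \<Rightarrow> real \<Rightarrow> int \<Rightarrow> real \<Rightarrow> real
    \<Rightarrow> real ^ 'n \<Rightarrow> complex" where
  "I1k psi h0 \<theta> eps k t tau z =
     integral UNIV (\<lambda>xi::real ^ 'n.
        exp (\<i> * complex_of_real (xi \<bullet> z))
        * complex_of_real (\<theta> (2 powr (- real_of_int k) * norm xi))
        * (complex_of_real (exp (- t / 2)) * exp (\<i> * complex_of_real (tau * lam psi h0 eps xi)))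
        / (lam_plus psi h0 eps xi - lam_minus psi h0 eps xi))"

end

theory Submission
  imports Defs
begin

text \<open>
  Since \<open>\<lambda>\<^sub>+ - \<lambda>\<^sub>- = 2 i \<lambda> / \<epsilon>\<close>, \<open>I\<^sub>1\<^sub>,\<^sub>k\<close> is \<open>\<epsilon> e\<^sup>-\<^sup>t\<^sup>/\<^sup>2 / (2 i)\<close> times the oscillatory
  integral of \<open>e\<^sup>i\<^sup>(\<^sup>\<xi>\<^sup>\<bullet>\<^sup>z\<^sup>+\<^sup>\<tau>\<^sup>\<lambda>\<^sup>) \<theta>(2\<^sup>-\<^sup>k |\<xi>|) / \<lambda>\<close>. For \<open>\<epsilon>\<^sup>2 \<le> 2 \<psi> h'(0)\<close> the symbol \<open>\<lambda>\<close> is real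
  and on the annulus \<open>|\<xi>| \<sim> 2\<^sup>k\<close> it is bounded below by \<open>max (\<psi> |\<xi>|) (sqrt (\<psi> h'(0) / 2))\<close>; the
  volume of the annulus then gives the bound with \<open>2\<^sup>k / (2\<^sup>k + 1)\<close>.

  For the decay in \<open>\<tau>\<close>, split \<open>\<real>\<^sup>N\<close> into a cone around a coordinate axis \<open>b\<^sub>1\<close> and its complement
  and integrate first along lines \<open>\<eta> + y b\<close> (with \<open>b = b\<^sub>1\<close>, resp. a second axis \<open>b\<^sub>2\<close>). What
  remains of each line lies in \<open>y\<^sup>2 \<le> |\<eta>|\<^sup>2\<close>, where the phase \<open>\<tau> \<lambda> + y (b \<bullet> z)\<close> has second
  derivative at least \<open>\<tau> \<psi>\<^sup>2 / (2 \<lambda>)\<close>. Van der Corput's lemma and Abel summation bound every line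
  integral by \<open>C \<tau>\<^sup>-\<^sup>1\<^sup>/\<^sup>2\<close> uniformly, and the cross-section of the annulus contributes \<open>2\<^sup>(\<^sup>N\<^sup>-\<^sup>1\<^sup>)\<^sup>k\<close>.
\<close>

section \<open>One-dimensional oscillatory integrals\<close>

lemma integral_exp_phase_by_parts:
  fixes \<phi> \<phi>1 \<phi>2 :: "real \<Rightarrow> real"
  assumes uv: "u \<le> v"
    and d1: "\<And>s. s \<in> {u..v} \<Longrightarrow> (\<phi> has_real_derivative \<phi>1 s) (at s)"
    and d2: "\<And>s. s \<in> {u..v} \<Longrightarrow> (\<phi>1 has_real_derivative \<phi>2 s) (at s)"
    and nz: "\<And>s. s \<in> {u..v} \<Longrightarrow> \<phi>1 s \<noteq> 0"
  defines "E \<equiv> \<lambda>s. exp (\<i> * of_real (\<phi> s))"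
    and "H \<equiv> \<lambda>s. - \<i> * (exp (\<i> * of_real (\<phi> s)) * of_real (1 / \<phi>1 s))"
  shows "(\<lambda>s. E s * of_real (\<phi>2 s / (\<phi>1 s)\<^sup>2)) integrable_on {u..v}"
    and "integral {u..v} E
           = (H v - H u) - \<i> * integral {u..v} (\<lambda>s. E s * of_real (\<phi>2 s / (\<phi>1 s)\<^sup>2))"
proof -
  define q where "q s = \<phi>2 s / (\<phi>1 s)\<^sup>2" for s
  have Ed: "(E has_vector_derivative (\<i> * of_real (\<phi>1 s)) * E s) (at s)" if "s \<in> {u..v}" for s
  proof -
    have "((\<lambda>s. \<i> * complex_of_real (\<phi> s)) has_vector_derivative \<i> * of_real (\<phi>1 s)) (at s)"
      by (intro has_vector_derivative_mult_right has_vector_derivative_of_real d1 that)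
    from field_vector_diff_chain_at[OF this DERIV_exp]
    show ?thesis by (simp add: E_def o_def)
  qed
  have Rd: "((\<lambda>s. 1 / \<phi>1 s) has_real_derivative - q s) (at s)" if "s \<in> {u..v}" for s
    using DERIV_inverse_fun[OF d2[OF that] nz[OF that]] nz[OF that]
    by (simp add: q_def divide_inverse power2_eq_square)
  have H_E: "H = (\<lambda>s. - \<i> * (E s * of_real (1 / \<phi>1 s)))" by (simp add: H_def E_def)
  have Hd: "(H has_vector_derivative (E s + \<i> * (E s * of_real (q s)))) (at s)"
    if s: "s \<in> {u..v}" for s
  proof -
    have "(H has_vector_derivative (-\<i> * (E s * of_real (- q s)
            + (\<i> * of_real (\<phi>1 s) * E s) * of_real (1 / \<phi>1 s)))) (at s)"
      unfolding H_E
      by (intro has_vector_derivative_mult_right has_vector_derivative_mult Ed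
          has_vector_derivative_of_real Rd s)
    moreover have "-\<i> * (E s * of_real (- q s) + (\<i> * of_real (\<phi>1 s) * E s) * of_real (1 / \<phi>1 s))
        = E s + \<i> * (E s * of_real (q s))"
      using nz[OF s] by (simp add: field_simps)
    ultimately show ?thesis by simp
  qed
  have Hint: "((\<lambda>s. E s + \<i> * (E s * of_real (q s))) has_integral H v - H u) {u..v}"
    using uv Hd by (intro fundamental_theorem_of_calculus) (auto intro: has_vector_derivative_at_within)
  have Eint: "E integrable_on {u..v}"
    using Ed by (intro integrable_continuous_interval continuous_on_vector_derivative)
      (auto intro: has_vector_derivative_at_within)
  have "(\<lambda>s. -\<i> * ((E s + \<i> * (E s * of_real (q s))) - E s)) integrable_on {u..v}"
    using Hint Eint by (intro integrable_on_mult_right integrable_diff) auto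
  then have EqI: "(\<lambda>s. E s * of_real (q s)) integrable_on {u..v}"
    by (simp add: algebra_simps)
  then show "(\<lambda>s. E s * of_real (\<phi>2 s / (\<phi>1 s)\<^sup>2)) integrable_on {u..v}"
    by (simp only: q_def)
  have "integral {u..v} (\<lambda>s. E s + \<i> * (E s * of_real (q s)))
      = integral {u..v} E + \<i> * integral {u..v} (\<lambda>s. E s * of_real (q s))"
    using Eint EqI by (simp add: integral_add integrable_on_mult_right)
  then have "integral {u..v} E = (H v - H u) - \<i> * integral {u..v} (\<lambda>s. E s * of_real (q s))"
    using integral_unique[OF Hint] by (simp add: algebra_simps)
  then show "integral {u..v} E
      = (H v - H u) - \<i> * integral {u..v} (\<lambda>s. E s * of_real (\<phi>2 s / (\<phi>1 s)\<^sup>2))"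
    by (simp only: q_def)
qed

lemma van_der_corput_first_derivative:
  fixes \<phi> \<phi>1 \<phi>2 :: "real \<Rightarrow> real"
  assumes uv: "u \<le> v" and dpos: "\<delta> > 0"
    and d1: "\<And>s. s \<in> {u..v} \<Longrightarrow> (\<phi> has_real_derivative \<phi>1 s) (at s)"
    and d2: "\<And>s. s \<in> {u..v} \<Longrightarrow> (\<phi>1 has_real_derivative \<phi>2 s) (at s)"
    and big: "\<And>s. s \<in> {u..v} \<Longrightarrow> \<delta> \<le> \<bar>\<phi>1 s\<bar>"
    and pos: "\<And>s. s \<in> {u..v} \<Longrightarrow> 0 \<le> \<phi>2 s"
  shows "norm (integral {u..v} (\<lambda>s. exp (\<i> * of_real (\<phi> s)))) \<le> 4 / \<delta>"
proof -
  define E where "E = (\<lambda>s. exp (\<i> * complex_of_real (\<phi> s)))"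
  define H where "H s = - \<i> * (E s * complex_of_real (1 / \<phi>1 s))" for s
  define q where "q s = \<phi>2 s / (\<phi>1 s)\<^sup>2" for s
  have nz: "\<phi>1 s \<noteq> 0" if "s \<in> {u..v}" for s using big[OF that] dpos by auto
  note by_parts = integral_exp_phase_by_parts[OF uv d1 d2 nz]
  have eq: "integral {u..v} E = (H v - H u) - \<i> * integral {u..v} (\<lambda>s. E s * of_real (q s))"
    using by_parts(2) by (simp add: E_def H_def q_def)
  have qint: "(q has_integral 1 / \<phi>1 u - 1 / \<phi>1 v) {u..v}"
  proof -
    have "((\<lambda>s. - (1 / \<phi>1 s)) has_real_derivative q s) (at s)" if "s \<in> {u..v}" for s
      using DERIV_minus[OF DERIV_inverse_fun[OF d2[OF that] nz[OF that]]] nz[OF that]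
      by (simp add: q_def divide_inverse power2_eq_square)
    then show ?thesis
      using fundamental_theorem_of_calculus[OF uv, of "\<lambda>s. - (1 / \<phi>1 s)" q] uv
      by (simp add: has_real_derivative_iff_has_vector_derivative[symmetric]
          has_field_derivative_at_within)
  qed
  have nH: "norm (H s) \<le> 1 / \<delta>" if "s \<in> {u..v}" for s
    using big[OF that] dpos by (simp add: H_def E_def norm_mult norm_divide frac_le)
  have "norm (integral {u..v} (\<lambda>s. E s * of_real (q s))) \<le> integral {u..v} q"
    using by_parts(1)[folded E_def] qint pos
    by (intro integral_norm_bound_integral) (auto simp: E_def q_def norm_mult norm_divide norm_power)
  also have "\<dots> = 1 / \<phi>1 u - 1 / \<phi>1 v" using integral_unique[OF qint] .
  also have "\<dots> \<le> 2 / \<delta>"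
  proof -
    have "\<bar>1 / \<phi>1 u\<bar> \<le> 1 / \<delta>" "\<bar>1 / \<phi>1 v\<bar> \<le> 1 / \<delta>"
      using big[of u] big[of v] uv dpos by (auto simp: frac_le)
    then show ?thesis by linarith
  qed
  finally have nq: "norm (integral {u..v} (\<lambda>s. E s * of_real (q s))) \<le> 2 / \<delta>" .
  have "norm (integral {u..v} E)
      \<le> norm (H v) + norm (H u) + norm (integral {u..v} (\<lambda>s. E s * of_real (q s)))"
    unfolding eq
    using norm_triangle_ineq4[of "H v - H u" "\<i> * integral {u..v} (\<lambda>s. E s * of_real (q s))"]
      norm_triangle_ineq4[of "H v" "H u"]
    by (simp add: norm_mult)
  also have "\<dots> \<le> 1 / \<delta> + 1 / \<delta> + 2 / \<delta>" using nH[of u] nH[of v] uv nq by (intro add_mono) auto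
  finally show ?thesis by (simp add: E_def)
qed

lemma increment_ge_of_deriv_ge:
  fixes f f' :: "real \<Rightarrow> real"
  assumes "w \<le> s"
    and "\<And>x. x \<in> {w..s} \<Longrightarrow> (f has_real_derivative f' x) (at x)"
    and "\<And>x. x \<in> {w..s} \<Longrightarrow> \<mu> \<le> f' x"
  shows "f w + \<mu> * (s - w) \<le> f s"
proof (cases "w = s")
  case False
  then have "w < s" using assms(1) by simp
  from MVT2[OF this, of f f'] assms(2)
  obtain z where z: "w < z" "z < s" "f s - f w = (s - w) * f' z" by auto
  have "\<mu> * (s - w) \<le> f' z * (s - w)"
    using assms(3)[of z] z \<open>w < s\<close> by (intro mult_right_mono) auto
  then show ?thesis using z by (simp add: algebra_simps)
qed simp

lemma exists_sign_change_point:
  fixes f :: "real \<Rightarrow> real"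
  assumes "u \<le> v" and "continuous_on {u..v} f"
  obtains w where "w \<in> {u..v}" "w = u \<or> f w \<le> 0" "w = v \<or> 0 \<le> f w"
proof (cases "0 \<le> f u \<or> f v \<le> 0")
  case True
  then show ?thesis using that[of u] that[of v] assms(1) by auto
next
  case False
  with IVT'[of f u 0 v] assms obtain x where "u \<le> x" "x \<le> v" "f x = 0" by auto
  then show ?thesis using that[of x] by auto
qed

text \<open>Van der Corput's lemma for a phase with \<open>\<phi>'' \<ge> \<mu>\<close>: away from the point \<open>w\<close> where \<open>\<phi>'\<close>
  changes sign, \<open>|\<phi>'| \<ge> \<mu> d\<close> at distance \<open>d = 1 / sqrt \<mu>\<close>, and the first-derivative estimate
  applies; the interval of length \<open>2 d\<close> around \<open>w\<close> is estimated trivially.\<close>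

lemma van_der_corput_second_derivative:
  fixes \<phi> \<phi>1 \<phi>2 :: "real \<Rightarrow> real"
  assumes uv: "u \<le> v" and mpos: "\<mu> > 0"
    and d1: "\<And>s. s \<in> {u..v} \<Longrightarrow> (\<phi> has_real_derivative \<phi>1 s) (at s)"
    and d2: "\<And>s. s \<in> {u..v} \<Longrightarrow> (\<phi>1 has_real_derivative \<phi>2 s) (at s)"
    and conv: "\<And>s. s \<in> {u..v} \<Longrightarrow> \<mu> \<le> \<phi>2 s"
  shows "norm (integral {u..v} (\<lambda>s. exp (\<i> * of_real (\<phi> s)))) \<le> 10 / sqrt \<mu>"
proof -
  define \<delta> where "\<delta> = sqrt \<mu>"
  define d where "d = 1 / \<delta>"
  have dpos: "\<delta> > 0" using mpos by (simp add: \<delta>_def)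
  have md: "\<mu> * d = \<delta>"
    using mpos by (simp add: d_def \<delta>_def field_simps real_sqrt_mult[symmetric])
  have d0: "d > 0" using dpos by (simp add: d_def)
  define E where "E = (\<lambda>s. exp (\<i> * complex_of_real (\<phi> s)))"
  have Eint: "E integrable_on {a..b}" if "u \<le> a" "b \<le> v" for a b
  proof -
    have "continuous_on {a..b} \<phi>"
      using that by (intro continuous_at_imp_continuous_on) (auto intro!: DERIV_isCont d1)
    then show ?thesis unfolding E_def by (intro integrable_continuous_interval continuous_intros)
  qed
  have "continuous_on {u..v} \<phi>1"
    by (intro continuous_at_imp_continuous_on) (auto intro!: DERIV_isCont d2)
  then obtain w where w: "w \<in> {u..v}" "w = u \<or> \<phi>1 w \<le> 0" "w = v \<or> 0 \<le> \<phi>1 w"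
    using exists_sign_change_point uv by blast
  have incr: "\<phi>1 a + \<mu> * (b - a) \<le> \<phi>1 b" if "u \<le> a" "a \<le> b" "b \<le> v" for a b
    using that by (intro increment_ge_of_deriv_ge[where f'=\<phi>2]) (auto intro: d2 conv)
  define a1 where "a1 = max u (w - d)"
  define a2 where "a2 = min v (w + d)"
  have ord: "u \<le> a1" "a1 \<le> a2" "a2 \<le> v" using w d0 by (auto simp: a1_def a2_def)
  have left: "norm (integral {u..a1} E) \<le> 4 / \<delta>"
  proof (cases "a1 = u")
    case False
    then have a1: "a1 = w - d" "\<phi>1 w \<le> 0" using d0 w by (auto simp: a1_def)
    show ?thesis unfolding E_def
    proof (rule van_der_corput_first_derivative[OF ord(1) dpos])
      fix s assume s: "s \<in> {u..a1}"
      then show "(\<phi> has_real_derivative \<phi>1 s) (at s)" "(\<phi>1 has_real_derivative \<phi>2 s) (at s)"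
        "0 \<le> \<phi>2 s"
        using ord d1 d2 conv[of s] mpos by auto
      have "\<phi>1 s + \<mu> * (w - s) \<le> \<phi>1 w" using s ord w a1 d0 by (intro incr) auto
      moreover have "\<mu> * d \<le> \<mu> * (w - s)" using s a1 mpos by (intro mult_left_mono) auto
      ultimately show "\<delta> \<le> \<bar>\<phi>1 s\<bar>" using a1 md by linarith
    qed
  qed (use dpos in simp)
  have right: "norm (integral {a2..v} E) \<le> 4 / \<delta>"
  proof (cases "a2 = v")
    case False
    then have a2: "a2 = w + d" "0 \<le> \<phi>1 w" using d0 w by (auto simp: a2_def)
    show ?thesis unfolding E_def
    proof (rule van_der_corput_first_derivative[OF ord(3) dpos])
      fix s assume s: "s \<in> {a2..v}"
      then show "(\<phi> has_real_derivative \<phi>1 s) (at s)" "(\<phi>1 has_real_derivative \<phi>2 s) (at s)"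
        "0 \<le> \<phi>2 s"
        using ord d1 d2 conv[of s] mpos by auto
      have "\<phi>1 w + \<mu> * (s - w) \<le> \<phi>1 s" using s ord w a2 d0 by (intro incr) auto
      moreover have "\<mu> * d \<le> \<mu> * (s - w)" using s a2 mpos by (intro mult_left_mono) auto
      ultimately show "\<delta> \<le> \<bar>\<phi>1 s\<bar>" using a2 md by linarith
    qed
  qed (use dpos in simp)
  have mid: "norm (integral {a1..a2} E) \<le> 2 * d"
  proof -
    have "norm (integral {a1..a2} E) \<le> integral {a1..a2} (\<lambda>_. 1::real)"
      using ord by (intro integral_norm_bound_integral Eint) (auto simp: E_def)
    also have "\<dots> \<le> 2 * d" using ord by (auto simp: a1_def a2_def)
    finally show ?thesis .
  qed
  have "integral {u..a1} E + integral {a1..a2} E = integral {u..a2} E"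
    using ord Eint by (intro Henstock_Kurzweil_Integration.integral_combine) auto
  moreover have "integral {u..a2} E + integral {a2..v} E = integral {u..v} E"
    using ord Eint by (intro Henstock_Kurzweil_Integration.integral_combine) auto
  ultimately have "norm (integral {u..v} E)
      \<le> norm (integral {u..a1} E) + norm (integral {a1..a2} E) + norm (integral {a2..v} E)"
    using norm_triangle_ineq[of "integral {u..a1} E + integral {a1..a2} E" "integral {a2..v} E"]
      norm_triangle_ineq[of "integral {u..a1} E" "integral {a1..a2} E"] by simp
  also have "\<dots> \<le> 4 / \<delta> + 2 * d + 4 / \<delta>" using left mid right by linarith
  also have "\<dots> = 10 / sqrt \<mu>" by (simp add: d_def \<delta>_def)
  finally show ?thesis by (simp add: E_def)
qed

lemma abel_summation_integral_le:
  fixes e :: "real \<Rightarrow> complex" and g g' :: "real \<Rightarrow> real"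
  assumes ab: "a \<le> b" and ec: "continuous_on {a..b} e"
    and gd: "\<And>s. s \<in> {a..b} \<Longrightarrow> (g has_real_derivative g' s) (at s)"
    and g'c: "continuous_on {a..b} g'"
    and Fb: "\<And>u. u \<in> {a..b} \<Longrightarrow> norm (integral {a..u} e) \<le> B"
    and g'b: "\<And>s. s \<in> {a..b} \<Longrightarrow> \<bar>g' s\<bar> \<le> G"
    and gb: "\<bar>g b\<bar> \<le> M"
  shows "norm (integral {a..b} (\<lambda>s. e s * of_real (g s))) \<le> B * (M + (b - a) * G)"
proof -
  define F where "F = (\<lambda>u. integral {a..u} e)"
  have Fd: "(F has_vector_derivative e u) (at u within {a..b})" if "u \<in> {a..b}" for u
    unfolding F_def using integral_has_vector_derivative[OF ec that] .
  have gd': "((\<lambda>s. complex_of_real (g s)) has_vector_derivative of_real (g' s)) (at s within {a..b})"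
    if "s \<in> {a..b}" for s
    using has_vector_derivative_of_real[OF has_field_derivative_at_within[OF gd[OF that]]] .
  have Pint: "((\<lambda>u. F u * of_real (g' u) + e u * of_real (g u))
      has_integral F b * of_real (g b) - F a * of_real (g a)) {a..b}"
    using ab Fd gd' by (intro fundamental_theorem_of_calculus has_vector_derivative_mult) auto
  have Fc: "continuous_on {a..b} F"
    using Fd by (intro continuous_on_vector_derivative) auto
  have gc: "continuous_on {a..b} g"
    by (intro continuous_at_imp_continuous_on) (auto intro!: DERIV_isCont gd)
  have I1: "(\<lambda>u. F u * of_real (g' u)) integrable_on {a..b}"
    by (intro integrable_continuous_interval continuous_intros Fc g'c)
  have I2: "(\<lambda>u. e u * of_real (g u)) integrable_on {a..b}"
    by (intro integrable_continuous_interval continuous_intros ec gc)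
  have eq: "integral {a..b} (\<lambda>s. e s * of_real (g s))
      = F b * of_real (g b) - integral {a..b} (\<lambda>u. F u * of_real (g' u))"
    using integral_unique[OF Pint] integral_add[OF I1 I2] by (simp add: F_def algebra_simps)
  have B0: "0 \<le> B" using Fb[of a] ab by simp
  have "norm (integral {a..b} (\<lambda>u. F u * of_real (g' u))) \<le> integral {a..b} (\<lambda>_. B * G)"
  proof (rule integral_norm_bound_integral[OF I1])
    fix x assume x: "x \<in> {a..b}"
    show "norm (F x * of_real (g' x)) \<le> B * G"
      using Fb[OF x] g'b[OF x] B0 by (auto simp: F_def norm_mult intro: mult_mono)
  qed auto
  also have "\<dots> = B * G * (b - a)" using ab by simp
  finally have n1: "norm (integral {a..b} (\<lambda>u. F u * of_real (g' u))) \<le> B * G * (b - a)" .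
  have n2: "norm (F b * of_real (g b)) \<le> B * M"
    using Fb[of b] ab gb B0 by (simp add: norm_mult F_def mult_mono)
  have "norm (integral {a..b} (\<lambda>s. e s * of_real (g s)))
      \<le> norm (F b * of_real (g b)) + norm (integral {a..b} (\<lambda>u. F u * of_real (g' u)))"
    unfolding eq by (rule norm_triangle_ineq4)
  also have "\<dots> \<le> B * M + B * G * (b - a)" using n1 n2 by linarith
  finally show ?thesis by (simp add: algebra_simps)
qed

lemma has_real_derivative_sqrt_quadratic:
  fixes a K :: real
  assumes "K > 0"
  shows "((\<lambda>y. sqrt (a\<^sup>2 * y\<^sup>2 + K)) has_real_derivative a\<^sup>2 * y / sqrt (a\<^sup>2 * y\<^sup>2 + K)) (at y)"
proof -
  have pos: "a\<^sup>2 * y\<^sup>2 + K > 0" using assms by (simp add: add_nonneg_pos)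
  have "((\<lambda>y. a\<^sup>2 * y\<^sup>2 + K) has_real_derivative a\<^sup>2 * (2 * y)) (at y)"
    by (auto intro!: derivative_eq_intros)
  from DERIV_chain2[OF DERIV_real_sqrt[OF pos] this] show ?thesis
    by (simp add: field_simps)
qed

lemma has_real_derivative_div_sqrt_quadratic:
  fixes a K :: real
  assumes "K > 0"
  shows "((\<lambda>y. y / sqrt (a\<^sup>2 * y\<^sup>2 + K)) has_real_derivative K / (sqrt (a\<^sup>2 * y\<^sup>2 + K))^3) (at y)"
proof -
  define S where "S = sqrt (a\<^sup>2 * y\<^sup>2 + K)"
  have S0: "S > 0" using assms by (simp add: S_def add_nonneg_pos)
  have SS: "S\<^sup>2 = a\<^sup>2 * y\<^sup>2 + K" using assms by (simp add: S_def add_nonneg_pos less_imp_le)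
  have "((\<lambda>y. y / sqrt (a\<^sup>2 * y\<^sup>2 + K)) has_real_derivative (1 * S - y * (a\<^sup>2 * y / S)) / (S * S)) (at y)"
    using DERIV_divide[OF DERIV_ident has_real_derivative_sqrt_quadratic[OF assms, of a y]] S0
    by (simp add: S_def)
  moreover have "(1 * S - y * (a\<^sup>2 * y / S)) / (S * S) = K / S^3"
    using S0 SS by (simp add: field_simps power2_eq_square power3_eq_cube)
  ultimately show ?thesis by (simp add: S_def)
qed

lemma abs_deriv_sqrt_quadratic_le:
  fixes a K y :: real
  assumes "K > 0"
  shows "\<bar>a\<^sup>2 * y / sqrt (a\<^sup>2 * y\<^sup>2 + K)\<bar> \<le> \<bar>a\<bar>"
proof -
  have S0: "0 < sqrt (a\<^sup>2 * y\<^sup>2 + K)" using assms by (simp add: add_nonneg_pos)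
  have "sqrt ((a * y)\<^sup>2) \<le> sqrt (a\<^sup>2 * y\<^sup>2 + K)"
    using assms by (intro real_sqrt_le_mono) (simp add: power_mult_distrib)
  then have "\<bar>a * y\<bar> \<le> sqrt (a\<^sup>2 * y\<^sup>2 + K)" by simp
  then have "\<bar>a\<bar> * \<bar>a * y\<bar> \<le> \<bar>a\<bar> * sqrt (a\<^sup>2 * y\<^sup>2 + K)" by (rule mult_left_mono) simp
  then show ?thesis using S0 by (simp add: abs_divide abs_mult power2_eq_square pos_divide_le_eq)
qed

text \<open>On the segment \<open>y\<^sup>2 \<le> D \<le> \<rho>\<close> the phase \<open>\<tau> \<Lambda>(y) + c y\<close>, \<open>\<Lambda>(y)\<^sup>2 = \<psi>\<^sup>2 y\<^sup>2 + K\<close>, has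
  second derivative \<open>\<tau> \<psi>\<^sup>2 K / \<Lambda>\<^sup>3 \<ge> \<tau> \<psi>\<^sup>2 / (2 \<Lambda>)\<close>, because there \<open>\<Lambda>\<^sup>2 \<le> 2 K\<close>.\<close>

lemma norm_integral_exp_line_phase_le:
  fixes \<psi> m \<tau> \<rho> D U c :: real
  assumes psi: "\<psi> > 0" and m: "m > 0" and tau: "\<tau> > 0" and D: "0 \<le> D" "D \<le> \<rho>"
    and Ub: "\<And>y. y\<^sup>2 \<le> D \<Longrightarrow> sqrt (\<psi>\<^sup>2 * (y\<^sup>2 + \<rho>) + m) \<le> U"
    and u: "u \<in> {-sqrt D..sqrt D}"
  shows "norm (integral {-sqrt D..u} (\<lambda>y. exp (\<i> * of_real (\<tau> * sqrt (\<psi>\<^sup>2 * (y\<^sup>2 + \<rho>) + m) + c * y))))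
           \<le> 10 / sqrt (\<tau> * \<psi>\<^sup>2 / (2 * U))"
proof -
  define K where "K = \<psi>\<^sup>2 * \<rho> + m"
  have K0: "K > 0" using m D by (simp add: K_def add_nonneg_pos)
  define \<Lambda> where "\<Lambda> = (\<lambda>y. sqrt (\<psi>\<^sup>2 * y\<^sup>2 + K))"
  have \<Lambda>eq: "sqrt (\<psi>\<^sup>2 * (y\<^sup>2 + \<rho>) + m) = \<Lambda> y" for y
    by (simp add: \<Lambda>_def K_def algebra_simps)
  have \<Lambda>0: "\<Lambda> y > 0" for y unfolding \<Lambda>_def using K0 by (simp add: add_nonneg_pos)
  have \<Lambda>sq: "(\<Lambda> y)\<^sup>2 = \<psi>\<^sup>2 * y\<^sup>2 + K" for y
    unfolding \<Lambda>_def using K0 by (simp add: add_nonneg_pos less_imp_le)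
  define \<mu> where "\<mu> = \<tau> * \<psi>\<^sup>2 / (2 * U)"
  have U0: "U > 0" using Ub[of 0] \<Lambda>0[of 0] \<Lambda>eq[of 0] D by simp
  have mu0: "\<mu> > 0" using U0 tau psi by (simp add: \<mu>_def)
  define \<phi>1 where "\<phi>1 = (\<lambda>y. \<tau> * (\<psi>\<^sup>2 * y / \<Lambda> y) + c)"
  define \<phi>2 where "\<phi>2 = (\<lambda>y. \<tau> * (\<psi>\<^sup>2 * (K / (\<Lambda> y)^3)))"
  have d1: "((\<lambda>y. \<tau> * \<Lambda> y + c * y) has_real_derivative \<phi>1 y) (at y)" for y
    unfolding \<phi>1_def \<Lambda>_def
    using DERIV_add[OF DERIV_cmult[OF has_real_derivative_sqrt_quadratic[OF K0]] DERIV_cmult[OF DERIV_ident]]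
    by simp
  have d2: "(\<phi>1 has_real_derivative \<phi>2 y) (at y)" for y
    unfolding \<phi>1_def \<phi>2_def \<Lambda>_def
    using DERIV_add[OF DERIV_cmult[OF DERIV_cmult[OF has_real_derivative_div_sqrt_quadratic[OF K0]]] DERIV_const]
    by (simp add: mult.assoc)
  have conv: "\<mu> \<le> \<phi>2 y" if "y \<in> {-sqrt D..sqrt D}" for y
  proof -
    have "\<bar>y\<bar> \<le> sqrt D" using that by auto
    then have "\<bar>y\<bar>\<^sup>2 \<le> (sqrt D)\<^sup>2" by (rule power_mono) simp
    then have "y\<^sup>2 \<le> D" using D by simp
    have "\<psi>\<^sup>2 * y\<^sup>2 \<le> \<psi>\<^sup>2 * \<rho>" using \<open>y\<^sup>2 \<le> D\<close> D by (intro mult_left_mono) auto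
    then have "(\<Lambda> y)\<^sup>2 \<le> 2 * K" unfolding \<Lambda>sq K_def using m by (smt (verit))
    have "1 / (2 * U) \<le> 1 / (2 * \<Lambda> y)"
      using Ub[OF \<open>y\<^sup>2 \<le> D\<close>] \<Lambda>eq[of y] \<Lambda>0[of y] by (simp add: frac_le)
    also have "\<dots> = ((\<Lambda> y)\<^sup>2 / 2) / (\<Lambda> y)^3"
      using \<Lambda>0[of y] by (simp add: power2_eq_square power3_eq_cube)
    also have "\<dots> \<le> K / (\<Lambda> y)^3"
      using \<open>(\<Lambda> y)\<^sup>2 \<le> 2 * K\<close> \<Lambda>0[of y] by (intro divide_right_mono) auto
    finally have "\<tau> * \<psi>\<^sup>2 * (1 / (2 * U)) \<le> \<tau> * \<psi>\<^sup>2 * (K / (\<Lambda> y)^3)"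
      using tau psi by (intro mult_left_mono) auto
    then show ?thesis by (simp add: \<mu>_def \<phi>2_def)
  qed
  have "norm (integral {-sqrt D..u} (\<lambda>y. exp (\<i> * of_real (\<tau> * \<Lambda> y + c * y)))) \<le> 10 / sqrt \<mu>"
    using u by (intro van_der_corput_second_derivative[OF _ mu0 d1 d2 conv]) auto
  then show ?thesis by (simp add: \<Lambda>eq \<mu>_def)
qed

section \<open>Fubini along a coordinate direction\<close>

lemma inner_sum_Basis_remove:
  fixes x :: "'a::euclidean_space \<Rightarrow> real"
  assumes "b' \<in> Basis"
  shows "(\<Sum>c\<in>Basis - {b}. x c *\<^sub>R c) \<bullet> b' = (if b' = b then 0 else x b')"
proof -
  have "(\<Sum>c\<in>Basis - {b}. x c *\<^sub>R c) \<bullet> b' = (\<Sum>c\<in>Basis - {b}. if c = b' then x c else 0)"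
    using assms by (simp add: inner_sum_left inner_Basis if_distrib cong: if_cong)
  also have "\<dots> = (if b' = b then 0 else x b')"
    using assms by (auto simp: sum.delta)
  finally show ?thesis .
qed

lemma norm_add_scaleR_Basis_sq:
  fixes \<eta> b :: "'a::euclidean_space"
  assumes "b \<in> Basis" and "\<eta> \<bullet> b = 0"
  shows "(norm (\<eta> + y *\<^sub>R b))\<^sup>2 = (norm \<eta>)\<^sup>2 + y\<^sup>2"
  using assms by (simp add: norm_add_Pythagorean orthogonal_def)

lemma line_preimage_cone:
  fixes b \<eta> :: "'a::euclidean_space"
  assumes b: "b \<in> Basis" and \<eta>: "\<eta> \<bullet> b = 0"
  shows "(\<lambda>y. \<eta> + y *\<^sub>R b) -` {\<xi>. 2 * (\<xi> \<bullet> b)\<^sup>2 \<le> (norm \<xi>)\<^sup>2}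
    = {-sqrt ((norm \<eta>)\<^sup>2)..sqrt ((norm \<eta>)\<^sup>2)}"
proof (intro set_eqI)
  fix y
  have "(\<eta> + y *\<^sub>R b) \<bullet> b = y" using b \<eta> by (simp add: inner_add_left)
  then have "\<eta> + y *\<^sub>R b \<in> {\<xi>. 2 * (\<xi> \<bullet> b)\<^sup>2 \<le> (norm \<xi>)\<^sup>2} \<longleftrightarrow> y\<^sup>2 \<le> (norm \<eta>)\<^sup>2"
    using norm_add_scaleR_Basis_sq[OF b \<eta>, of y] by simp
  also have "\<dots> \<longleftrightarrow> y \<in> {-sqrt ((norm \<eta>)\<^sup>2)..sqrt ((norm \<eta>)\<^sup>2)}"
    using abs_le_square_iff[of y "norm \<eta>"] by (auto simp: abs_le_iff)
  finally show "y \<in> (\<lambda>y. \<eta> + y *\<^sub>R b) -` {\<xi>. 2 * (\<xi> \<bullet> b)\<^sup>2 \<le> (norm \<xi>)\<^sup>2}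
      \<longleftrightarrow> y \<in> {-sqrt ((norm \<eta>)\<^sup>2)..sqrt ((norm \<eta>)\<^sup>2)}" by simp
qed

lemma line_preimage_cone_complement:
  fixes b1 b2 \<eta> :: "'a::euclidean_space"
  assumes b: "b1 \<in> Basis" "b2 \<in> Basis" "b1 \<noteq> b2" and \<eta>: "\<eta> \<bullet> b2 = 0"
  obtains D where "0 \<le> D" "D \<le> (norm \<eta>)\<^sup>2"
    "(\<lambda>y. \<eta> + y *\<^sub>R b2) -` (- {\<xi>. 2 * (\<xi> \<bullet> b1)\<^sup>2 \<le> (norm \<xi>)\<^sup>2}) = {-sqrt D<..<sqrt D}"
proof
  define D where "D = max 0 (2 * (\<eta> \<bullet> b1)\<^sup>2 - (norm \<eta>)\<^sup>2)"
  have "\<bar>\<eta> \<bullet> b1\<bar>\<^sup>2 \<le> (norm \<eta>)\<^sup>2" using Basis_le_norm[OF b(1)] by (intro power_mono) auto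
  then show "0 \<le> D" "D \<le> (norm \<eta>)\<^sup>2" by (auto simp: D_def)
  show "(\<lambda>y. \<eta> + y *\<^sub>R b2) -` (- {\<xi>. 2 * (\<xi> \<bullet> b1)\<^sup>2 \<le> (norm \<xi>)\<^sup>2}) = {-sqrt D<..<sqrt D}"
  proof (intro set_eqI)
    fix y
    have "(\<eta> + y *\<^sub>R b2) \<bullet> b1 = \<eta> \<bullet> b1" using b by (simp add: inner_add_left inner_Basis)
    then have "y \<in> (\<lambda>y. \<eta> + y *\<^sub>R b2) -` (- {\<xi>. 2 * (\<xi> \<bullet> b1)\<^sup>2 \<le> (norm \<xi>)\<^sup>2})
        \<longleftrightarrow> y\<^sup>2 < 2 * (\<eta> \<bullet> b1)\<^sup>2 - (norm \<eta>)\<^sup>2"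
      using norm_add_scaleR_Basis_sq[OF b(2) \<eta>, of y] by auto
    also have "\<dots> \<longleftrightarrow> y\<^sup>2 < D"
      using zero_le_power2[of y] by (auto simp: D_def less_max_iff_disj)
    also have "\<dots> \<longleftrightarrow> y \<in> {-sqrt D<..<sqrt D}"
      using real_sqrt_less_iff[of "y\<^sup>2" D] by (auto simp: abs_less_iff)
    finally show "y \<in> (\<lambda>y. \<eta> + y *\<^sub>R b2) -` (- {\<xi>. 2 * (\<xi> \<bullet> b1)\<^sup>2 \<le> (norm \<xi>)\<^sup>2})
        \<longleftrightarrow> y \<in> {-sqrt D<..<sqrt D}" .
  qed
qed

lemma integral_lborel_along_Basis:
  fixes F :: "'a::euclidean_space \<Rightarrow> complex"
  assumes F: "integrable lborel F" and b: "b \<in> Basis"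
  shows "integral\<^sup>L lborel F
    = (\<integral>x. (\<integral>y. F ((\<Sum>c\<in>Basis - {b}. x c *\<^sub>R c) + y *\<^sub>R b) \<partial>lborel)
         \<partial>(PiM (Basis - {b}) (\<lambda>_. lborel)))"
proof -
  interpret P: product_sigma_finite "\<lambda>_::'a. lborel :: real measure" by standard
  define S where "S = (\<lambda>f. \<Sum>b\<in>Basis. f b *\<^sub>R (b::'a))"
  have Sm: "S \<in> measurable (PiM Basis (\<lambda>_. lborel)) (borel :: 'a measure)"
    unfolding S_def by measurable
  have Fm: "F \<in> borel_measurable borel" using borel_measurable_integrable[OF F] by simp
  have lborel_S: "lborel = distr (PiM Basis (\<lambda>_. lborel)) borel S"
    unfolding S_def by (rule lborel_eq)
  have int1: "integrable (PiM Basis (\<lambda>_. lborel)) (\<lambda>x. F (S x))"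
    using F integrable_distr_eq[OF Sm Fm] by (simp flip: lborel_S)
  have ins: "insert b (Basis - {b}) = Basis" using b by auto
  have S_upd: "S (x(b := y)) = (\<Sum>c\<in>Basis - {b}. x c *\<^sub>R c) + y *\<^sub>R b" for x y
  proof -
    have "S (x(b := y)) = (x(b := y)) b *\<^sub>R b + (\<Sum>c\<in>Basis - {b}. (x(b := y)) c *\<^sub>R c)"
      unfolding S_def by (rule sum.remove[OF finite_Basis b])
    also have "(\<Sum>c\<in>Basis - {b}. (x(b := y)) c *\<^sub>R c) = (\<Sum>c\<in>Basis - {b}. x c *\<^sub>R c)"
      by (rule sum.cong) auto
    finally show ?thesis by (simp only: fun_upd_same add.commute)
  qed
  have "integral\<^sup>L lborel F = (\<integral>x. F (S x) \<partial>(PiM Basis (\<lambda>_. lborel)))"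
    using integral_distr[OF Sm Fm] by (simp flip: lborel_S)
  also have "\<dots> = (\<integral>x. F (S x) \<partial>(PiM (insert b (Basis - {b})) (\<lambda>_. lborel)))"
    by (simp only: ins)
  also have "\<dots> = (\<integral>x. (\<integral>y. F (S (x(b := y))) \<partial>lborel) \<partial>(PiM (Basis - {b}) (\<lambda>_. lborel)))"
    by (rule P.product_integral_insert) (use int1 ins in auto)
  finally show ?thesis by (simp only: S_upd)
qed

lemma norm_integral_le_by_lines:
  fixes F :: "'a::euclidean_space \<Rightarrow> complex"
  assumes F: "integrable lborel F" and b: "b \<in> Basis" and C: "C \<ge> 0" and R: "R \<ge> 0"
    and inside: "\<And>x. (\<forall>c\<in>Basis - {b}. \<bar>x c\<bar> \<le> R) \<Longrightarrow>
        norm (\<integral>y. F ((\<Sum>c\<in>Basis - {b}. x c *\<^sub>R c) + y *\<^sub>R b) \<partial>lborel) \<le> C"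
    and outside: "\<And>x c. c \<in> Basis - {b} \<Longrightarrow> \<bar>x c\<bar> > R \<Longrightarrow>
        (\<integral>y. F ((\<Sum>c\<in>Basis - {b}. x c *\<^sub>R c) + y *\<^sub>R b) \<partial>lborel) = 0"
  shows "norm (integral UNIV F) \<le> C * (2 * R) ^ (DIM('a) - 1)"
proof -
  interpret P: product_sigma_finite "\<lambda>_::'a. lborel :: real measure" by standard
  define h where "h = (\<lambda>x. \<integral>y. F ((\<Sum>c\<in>Basis - {b}. x c *\<^sub>R c) + y *\<^sub>R b) \<partial>lborel)"
  define M where "M = PiM (Basis - {b}) (\<lambda>_::'a. lborel :: real measure)"
  define Box where "Box = PiE (Basis - {b}) (\<lambda>_::'a. {-R..R})"
  have eq: "integral UNIV F = integral\<^sup>L M h"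
    using integral_lborel[OF F] integral_lborel_along_Basis[OF F b] by (simp add: h_def M_def)
  have emB: "emeasure M Box = ennreal ((2 * R) ^ (DIM('a) - 1))"
  proof -
    have "emeasure M Box = (\<Prod>i\<in>Basis - {b}. emeasure lborel {-R..R})"
      unfolding M_def Box_def by (rule P.emeasure_PiM) auto
    also have "\<dots> = ennreal ((2 * R) ^ card (Basis - {b}))"
      using R by (simp add: prod_ennreal ennreal_power)
    finally show ?thesis using b by (simp add: card_Diff_singleton)
  qed
  have Bsets: "Box \<in> sets M" unfolding M_def Box_def by (intro sets_PiM_I_finite) auto
  have h_le: "ennreal (norm (h x)) \<le> ennreal C * indicator Box x" if "x \<in> space M" for x
  proof (cases "x \<in> Box")
    case True
    have "\<forall>c\<in>Basis - {b}. \<bar>x c\<bar> \<le> R"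
    proof
      fix c assume "c \<in> Basis - {b}"
      with True have "x c \<in> {-R..R}" unfolding Box_def by blast
      then show "\<bar>x c\<bar> \<le> R" by auto
    qed
    then show ?thesis using inside True by (simp add: h_def ennreal_leI)
  next
    case False
    have "x \<in> extensional (Basis - {b})" using that by (simp add: M_def space_PiM PiE_def)
    with False obtain c where "c \<in> Basis - {b}" "\<bar>x c\<bar> > R"
      unfolding Box_def PiE_def Pi_def by fastforce
    then show ?thesis using outside by (simp add: h_def)
  qed
  show ?thesis
  proof (cases "integrable M h")
    case True
    have "ennreal (norm (integral\<^sup>L M h)) \<le> (\<integral>\<^sup>+x. ennreal (norm (h x)) \<partial>M)"
      by (rule integral_norm_bound_ennreal[OF True])
    also have "\<dots> \<le> (\<integral>\<^sup>+x. ennreal C * indicator Box x \<partial>M)"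
      using h_le by (intro nn_integral_mono)
    also have "\<dots> = ennreal (C * (2 * R) ^ (DIM('a) - 1))"
      using C R by (simp add: nn_integral_cmult_indicator[OF Bsets] emB ennreal_mult)
    finally show ?thesis using eq C R by (simp add: ennreal_le_iff)
  qed (use eq C R in \<open>simp add: not_integrable_integral_eq\<close>)
qed

section \<open>The symbol on the support of the cutoff\<close>

lemma lam_eq: "lam \<psi> h0 \<epsilon> \<xi> = sqrt (\<psi>\<^sup>2 * (norm \<xi>)\<^sup>2 + (\<psi> * h0 - \<epsilon>\<^sup>2 / 4))"
  by (simp add: lam_def add_diff_eq)

locale cutoff_symbol =
  fixes \<psi> h0 :: real and \<theta> \<theta>' :: "real \<Rightarrow> real" and M M1 :: real
  assumes psi_pos: "0 < \<psi>" and h0_pos: "0 < h0"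
    and theta_deriv: "\<And>x. (\<theta> has_real_derivative \<theta>' x) (at x)"
    and theta'_cont: "continuous_on UNIV \<theta>'"
    and theta_bound: "\<And>x. \<bar>\<theta> x\<bar> \<le> M"
    and theta'_bound: "\<And>x. \<bar>\<theta>' x\<bar> \<le> M1"
    and theta_support: "\<And>x. \<theta> x \<noteq> 0 \<Longrightarrow> x \<in> {1/6..3}"
    and theta'_support: "\<And>x. \<theta>' x \<noteq> 0 \<Longrightarrow> x \<in> {1/6..3}"
begin

lemma M_nonneg: "0 \<le> M"
  using theta_bound[of 0] by linarith

lemma M1_nonneg: "0 \<le> M1"
  using theta'_bound[of 0] by linarith

lemma theta_cont: "continuous_on UNIV \<theta>"
  using theta_deriv by (intro continuous_at_imp_continuous_on) (auto intro: DERIV_isCont)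

definition lam_lower_const :: real where
  "lam_lower_const = min (\<psi> / 6) (sqrt (\<psi> * h0 / 2))"

definition lam_upper_const :: real where
  "lam_upper_const = sqrt (18 * \<psi>\<^sup>2 + \<psi> * h0)"

definition decay_const :: real where
  "decay_const = 10 * sqrt (2 * lam_upper_const) / \<psi>
     * ((M + 6 * M1 + 6 * M * \<psi> / lam_lower_const) / lam_lower_const)"

lemma lam_lower_const_pos: "0 < lam_lower_const"
  using psi_pos h0_pos by (simp add: lam_lower_const_def)

lemma lam_upper_const_pos: "0 < lam_upper_const"
  using psi_pos h0_pos by (simp add: lam_upper_const_def add_pos_pos)

lemma decay_const_nonneg: "0 \<le> decay_const"
  using psi_pos M_nonneg M1_nonneg lam_lower_const_pos lam_upper_const_pos
  by (simp add: decay_const_def)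

text \<open>On the support of \<open>\<theta>(q |\<xi>|)\<close>, \<open>|\<xi>| \<ge> 1 / (6 q)\<close>, so \<open>\<lambda>\<close> is bounded below both by
  \<open>\<psi> |\<xi>|\<close> and, for \<open>\<epsilon>\<close> small, by \<open>sqrt (\<psi> h0 / 2)\<close>.\<close>

lemma lam_radial_lower:
  assumes eps: "\<epsilon>\<^sup>2 \<le> 2 * \<psi> * h0" and q: "q > 0" and r: "r \<ge> 0" and qr: "1/6 \<le> q * r"
  shows "lam_lower_const * max 1 (1 / q) \<le> sqrt (\<psi>\<^sup>2 * r\<^sup>2 + (\<psi> * h0 - \<epsilon>\<^sup>2 / 4))"
proof -
  define m where "m = \<psi> * h0 - \<epsilon>\<^sup>2 / 4"
  have m: "\<psi> * h0 / 2 \<le> m" using eps by (simp add: m_def)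
  have m0: "0 \<le> m" using m mult_pos_pos[OF psi_pos h0_pos] by linarith
  have "\<psi> * r = sqrt (\<psi>\<^sup>2 * r\<^sup>2)" using psi_pos r by (simp add: real_sqrt_mult)
  also have "\<dots> \<le> sqrt (\<psi>\<^sup>2 * r\<^sup>2 + m)" using m0 by (intro real_sqrt_le_mono) simp
  finally have e1: "\<psi> * r \<le> sqrt (\<psi>\<^sup>2 * r\<^sup>2 + m)" .
  have e2: "sqrt (\<psi> * h0 / 2) \<le> sqrt (\<psi>\<^sup>2 * r\<^sup>2 + m)"
    using m by (intro real_sqrt_le_mono) (simp add: add_increasing)
  show ?thesis
  proof (cases "1 / q \<le> 1")
    case True
    then have "lam_lower_const * max 1 (1 / q) \<le> sqrt (\<psi> * h0 / 2)"
      by (simp add: lam_lower_const_def)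
    with e2 show ?thesis unfolding m_def by linarith
  next
    case False
    have "lam_lower_const * max 1 (1 / q) = lam_lower_const * (1 / q)" using False by simp
    also have "\<dots> \<le> \<psi> / 6 * (1 / q)"
      using q by (intro mult_right_mono) (auto simp: lam_lower_const_def)
    also have "\<dots> \<le> \<psi> * r" using q qr psi_pos by (simp add: field_simps)
    finally show ?thesis using e1 by (simp add: m_def)
  qed
qed

lemma lam_radial_upper:
  assumes q: "q > 0" and r: "r\<^sup>2 \<le> 18 * (1 / q)\<^sup>2"
  shows "sqrt (\<psi>\<^sup>2 * r\<^sup>2 + (\<psi> * h0 - \<epsilon>\<^sup>2 / 4)) \<le> lam_upper_const * max 1 (1 / q)"
proof -
  define X where "X = max 1 (1 / q)"
  have X: "1 \<le> X\<^sup>2" "(1 / q)\<^sup>2 \<le> X\<^sup>2"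
    using q by (auto simp: X_def one_le_power intro!: power_mono)
  have "\<psi>\<^sup>2 * r\<^sup>2 \<le> \<psi>\<^sup>2 * (18 * X\<^sup>2)" using r X by (intro mult_left_mono) auto
  moreover have "\<psi> * h0 * 1 \<le> \<psi> * h0 * X\<^sup>2" using X psi_pos h0_pos by (intro mult_left_mono) auto
  ultimately have "\<psi>\<^sup>2 * r\<^sup>2 + (\<psi> * h0 - \<epsilon>\<^sup>2 / 4) \<le> \<psi>\<^sup>2 * (18 * X\<^sup>2) + \<psi> * h0 * X\<^sup>2"
    using zero_le_power2[of \<epsilon>] by linarith
  also have "\<dots> = (lam_upper_const * X)\<^sup>2"
    using psi_pos h0_pos by (simp add: lam_upper_const_def power_mult_distrib algebra_simps)
  finally show ?thesis
    using lam_upper_const_pos by (simp add: X_def real_sqrt_le_iff real_le_lsqrt)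
qed

lemma abs_theta_div_le:
  assumes "0 < L" and "\<theta> x \<noteq> 0 \<Longrightarrow> L \<le> \<Lambda>"
  shows "\<bar>\<theta> x / \<Lambda>\<bar> \<le> M / L"
proof (cases "\<theta> x = 0")
  case False
  then have "\<bar>\<theta> x\<bar> / \<bar>\<Lambda>\<bar> \<le> M / L"
    using assms theta_bound[of x] M_nonneg by (intro frac_le) auto
  then show ?thesis by (simp add: abs_divide)
qed (use assms M_nonneg in simp)

text \<open>The amplitude along a line, \<open>y \<mapsto> \<theta>(q r(y)) / \<Lambda>(y)\<close> with \<open>r(y) = sqrt (y\<^sup>2 + \<rho>)\<close>;
  its derivative is controlled because \<open>|r'| \<le> 1\<close> and \<open>|\<Lambda>'| \<le> \<psi>\<close>.\<close>

lemma line_amplitude_deriv: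
  assumes m: "m > 0" and rho: "\<rho> > 0" and q: "q > 0" and L: "L > 0"
    and Lb: "\<And>y. \<theta> (q * sqrt (y\<^sup>2 + \<rho>)) \<noteq> 0 \<or> \<theta>' (q * sqrt (y\<^sup>2 + \<rho>)) \<noteq> 0
               \<Longrightarrow> L \<le> sqrt (\<psi>\<^sup>2 * (y\<^sup>2 + \<rho>) + m)"
  obtains g' where
    "\<And>y. ((\<lambda>y. \<theta> (q * sqrt (y\<^sup>2 + \<rho>)) / sqrt (\<psi>\<^sup>2 * (y\<^sup>2 + \<rho>) + m)) has_real_derivative g' y) (at y)"
    and "continuous_on UNIV g'"
    and "\<And>y. \<bar>g' y\<bar> \<le> M1 * q / L + M * \<psi> / L\<^sup>2"
proof -
  define K where "K = \<psi>\<^sup>2 * \<rho> + m"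
  have K0: "K > 0" using m rho by (simp add: K_def add_nonneg_pos)
  define \<Lambda> where "\<Lambda> = (\<lambda>y. sqrt (\<psi>\<^sup>2 * y\<^sup>2 + K))"
  define r where "r = (\<lambda>y. sqrt (1\<^sup>2 * y\<^sup>2 + \<rho>))"
  have \<Lambda>eq: "sqrt (\<psi>\<^sup>2 * (y\<^sup>2 + \<rho>) + m) = \<Lambda> y" for y
    by (simp add: \<Lambda>_def K_def algebra_simps)
  have req: "sqrt (y\<^sup>2 + \<rho>) = r y" for y by (simp add: r_def)
  have \<Lambda>0: "\<Lambda> y > 0" for y unfolding \<Lambda>_def using K0 by (simp add: add_nonneg_pos)
  have r0: "r y > 0" for y unfolding r_def using rho by (simp add: add_nonneg_pos)
  have \<Lambda>'b: "\<bar>\<psi>\<^sup>2 * y / \<Lambda> y\<bar> \<le> \<psi>" for y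
    using abs_deriv_sqrt_quadratic_le[OF K0, of \<psi> y] psi_pos by (simp add: \<Lambda>_def)
  have r'b: "\<bar>y / r y\<bar> \<le> 1" for y
    using abs_deriv_sqrt_quadratic_le[OF rho, of 1 y] by (simp add: r_def)
  define g' where "g' = (\<lambda>y. \<theta>' (q * r y) * (q * (y / r y)) / \<Lambda> y
      - \<theta> (q * r y) * (\<psi>\<^sup>2 * y / \<Lambda> y) / (\<Lambda> y)\<^sup>2)"
  show ?thesis
  proof
    fix y
    have "((\<lambda>y. \<theta> (q * r y)) has_real_derivative \<theta>' (q * r y) * (q * (y / r y))) (at y)"
      using DERIV_chain2[OF theta_deriv DERIV_cmult[OF has_real_derivative_sqrt_quadratic[OF rho, of 1 y], of q]]
      by (simp add: r_def)
    moreover have "(\<Lambda> has_real_derivative \<psi>\<^sup>2 * y / \<Lambda> y) (at y)"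
      unfolding \<Lambda>_def by (rule has_real_derivative_sqrt_quadratic[OF K0])
    ultimately have "((\<lambda>y. \<theta> (q * r y) / \<Lambda> y) has_real_derivative
        (\<theta>' (q * r y) * (q * (y / r y)) * \<Lambda> y - \<theta> (q * r y) * (\<psi>\<^sup>2 * y / \<Lambda> y)) / (\<Lambda> y * \<Lambda> y)) (at y)"
      using \<Lambda>0[of y] by (intro DERIV_divide) auto
    moreover have "(\<theta>' (q * r y) * (q * (y / r y)) * \<Lambda> y - \<theta> (q * r y) * (\<psi>\<^sup>2 * y / \<Lambda> y))
        / (\<Lambda> y * \<Lambda> y) = g' y"
      using \<Lambda>0[of y] by (simp add: g'_def diff_divide_distrib power2_eq_square)
    ultimately show "((\<lambda>y. \<theta> (q * sqrt (y\<^sup>2 + \<rho>)) / sqrt (\<psi>\<^sup>2 * (y\<^sup>2 + \<rho>) + m))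
        has_real_derivative g' y) (at y)"
      unfolding \<Lambda>eq req by simp
  next
    have "\<Lambda> y \<noteq> 0" "r y \<noteq> 0" for y using \<Lambda>0[of y] r0[of y] by auto
    then show "continuous_on UNIV g'" unfolding g'_def \<Lambda>_def r_def
      by (intro continuous_intros continuous_on_compose2[OF theta'_cont]
          continuous_on_compose2[OF theta_cont]) (auto simp: \<Lambda>_def r_def)
  next
    fix y
    have t1: "\<bar>\<theta>' (q * r y) * (q * (y / r y)) / \<Lambda> y\<bar> \<le> M1 * q / L"
    proof (cases "\<theta>' (q * r y) = 0")
      case False
      then have "L \<le> \<Lambda> y" using Lb[of y] by (simp add: \<Lambda>eq req)
      moreover have "\<bar>\<theta>' (q * r y)\<bar> * (q * \<bar>y / r y\<bar>) \<le> M1 * (q * 1)"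
        using theta'_bound[of "q * r y"] r'b[of y] q M1_nonneg
        by (intro mult_mono mult_left_mono) auto
      then have "\<bar>\<theta>' (q * r y) * (q * (y / r y))\<bar> \<le> M1 * q"
        using q by (simp only: abs_mult abs_of_pos mult_1_right)
      ultimately have "\<bar>\<theta>' (q * r y) * (q * (y / r y))\<bar> / \<Lambda> y \<le> M1 * q / L"
        using L M1_nonneg q by (intro frac_le) auto
      then show ?thesis by (simp only: abs_divide abs_of_pos[OF \<Lambda>0])
    qed (use L q M1_nonneg in simp)
    have t2: "\<bar>\<theta> (q * r y) * (\<psi>\<^sup>2 * y / \<Lambda> y) / (\<Lambda> y)\<^sup>2\<bar> \<le> M * \<psi> / L\<^sup>2"
    proof (cases "\<theta> (q * r y) = 0")
      case False
      then have "L\<^sup>2 \<le> (\<Lambda> y)\<^sup>2" using Lb[of y] L by (simp add: \<Lambda>eq req power_mono)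
      moreover have "\<bar>\<theta> (q * r y) * (\<psi>\<^sup>2 * y / \<Lambda> y)\<bar> \<le> M * \<psi>"
        unfolding abs_mult using theta_bound[of "q * r y"] \<Lambda>'b[of y] by (intro mult_mono) auto
      ultimately have "\<bar>\<theta> (q * r y) * (\<psi>\<^sup>2 * y / \<Lambda> y)\<bar> / (\<Lambda> y)\<^sup>2 \<le> M * \<psi> / L\<^sup>2"
        using L psi_pos M_nonneg by (intro frac_le) auto
      then show ?thesis by (simp only: abs_divide abs_power2)
    qed (use L psi_pos M_nonneg in simp)
    show "\<bar>g' y\<bar> \<le> M1 * q / L + M * \<psi> / L\<^sup>2"
      using abs_triangle_ineq4[of "\<theta>' (q * r y) * (q * (y / r y)) / \<Lambda> y"] t1 t2
      unfolding g'_def by linarith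
  qed
qed

text \<open>The integrand of \<open>I\<^sub>1\<^sub>,\<^sub>k\<close> restricted to the line \<open>\<eta> + y b\<close>, with \<open>\<rho> = |\<eta>|\<^sup>2\<close>, \<open>c = b \<bullet> z\<close>,
  \<open>q = 2\<^sup>-\<^sup>k\<close>, after removing the unimodular factor \<open>exp (i \<eta> \<bullet> z)\<close>.\<close>

definition line_integrand :: "real \<Rightarrow> real \<Rightarrow> real \<Rightarrow> real \<Rightarrow> real \<Rightarrow> real \<Rightarrow> complex" where
  "line_integrand \<epsilon> q \<tau> \<rho> c y =
     exp (\<i> * of_real (\<tau> * sqrt (\<psi>\<^sup>2 * (y\<^sup>2 + \<rho>) + (\<psi> * h0 - \<epsilon>\<^sup>2 / 4)) + c * y))
     * of_real (\<theta> (q * sqrt (y\<^sup>2 + \<rho>)) / sqrt (\<psi>\<^sup>2 * (y\<^sup>2 + \<rho>) + (\<psi> * h0 - \<epsilon>\<^sup>2 / 4)))"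

lemma line_bound_constant_le:
  assumes q: "q > 0" and tau: "\<tau> > 0" and s: "0 \<le> s" "s \<le> 3 / q"
  defines "X \<equiv> max 1 (1 / q)"
  shows "10 / sqrt (\<tau> * \<psi>\<^sup>2 / (2 * (lam_upper_const * X)))
      * (M / (lam_lower_const * X) + 2 * s * (M1 * q / (lam_lower_const * X)
          + M * \<psi> / (lam_lower_const * X)\<^sup>2))
    \<le> decay_const / sqrt \<tau>"
proof -
  define l where "l = lam_lower_const"
  define u where "u = lam_upper_const"
  define K0 where "K0 = M + 6 * M1 + 6 * M * \<psi> / l"
  have l0: "l > 0" and u0: "u > 0" using lam_lower_const_pos lam_upper_const_pos by (auto simp: l_def u_def)
  have X: "1 \<le> X" "1 / q \<le> X" "0 < X" by (auto simp: X_def)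
  have K0: "0 \<le> K0" using M_nonneg M1_nonneg psi_pos l0 by (simp add: K0_def)
  have A: "10 / sqrt (\<tau> * \<psi>\<^sup>2 / (2 * (u * X))) = 10 * sqrt (2 * u) * sqrt X / (\<psi> * sqrt \<tau>)"
    using psi_pos u0 X tau by (simp add: real_sqrt_divide real_sqrt_mult field_simps)
  have "2 * s * (M1 * q / (l * X) + M * \<psi> / (l * X)\<^sup>2)
      \<le> 6 * (1 / q) * (M1 * q / (l * X) + M * \<psi> / (l * X)\<^sup>2)"
    using s M_nonneg M1_nonneg q psi_pos l0 X by (intro mult_right_mono) auto
  also have "\<dots> = 6 * M1 / (l * X) + 6 * M * \<psi> / l / (l * X) * ((1 / q) / X)"
    using q l0 X by (simp add: field_simps power2_eq_square)
  also have "\<dots> \<le> 6 * M1 / (l * X) + 6 * M * \<psi> / l / (l * X) * 1"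
    using X M_nonneg psi_pos l0 divide_le_eq_1[of "1 / q" X] by (intro add_left_mono mult_left_mono) auto
  finally have B: "M / (l * X) + 2 * s * (M1 * q / (l * X) + M * \<psi> / (l * X)\<^sup>2) \<le> K0 / (l * X)"
    by (simp add: K0_def add_divide_distrib)
  have "sqrt X / X \<le> 1"
    using X real_sqrt_le_mono[of X "X\<^sup>2"] by (simp add: power2_eq_square divide_le_eq_1 one_le_power)
  have "10 * sqrt (2 * u) * sqrt X / (\<psi> * sqrt \<tau>)
      * (M / (l * X) + 2 * s * (M1 * q / (l * X) + M * \<psi> / (l * X)\<^sup>2))
      \<le> 10 * sqrt (2 * u) * sqrt X / (\<psi> * sqrt \<tau>) * (K0 / (l * X))"
    using B psi_pos tau u0 X by (intro mult_left_mono) auto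
  also have "\<dots> = (10 * sqrt (2 * u) / \<psi> * (K0 / l)) / sqrt \<tau> * (sqrt X / X)"
    using X l0 psi_pos tau by (simp add: field_simps)
  also have "\<dots> \<le> (10 * sqrt (2 * u) / \<psi> * (K0 / l)) / sqrt \<tau>"
    using \<open>sqrt X / X \<le> 1\<close> psi_pos u0 K0 l0 tau by (intro mult_left_le) auto
  also have "\<dots> = decay_const / sqrt \<tau>" by (simp add: decay_const_def K0_def l_def u_def)
  finally show ?thesis unfolding l_def[symmetric] u_def[symmetric] A .
qed

lemma norm_integral_line_le:
  assumes eps: "\<epsilon>\<^sup>2 \<le> 2 * \<psi> * h0" and tau: "\<tau> > 0" and rho: "\<rho> > 0"
    and D: "0 \<le> D" "D \<le> \<rho>" and q: "q > 0" and rho_q: "sqrt \<rho> \<le> 3 / q"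
  shows "norm (integral {-sqrt D..sqrt D} (line_integrand \<epsilon> q \<tau> \<rho> c)) \<le> decay_const / sqrt \<tau>"
proof -
  define m where "m = \<psi> * h0 - \<epsilon>\<^sup>2 / 4"
  define X where "X = max 1 (1 / q)"
  define L where "L = lam_lower_const * X"
  define U where "U = lam_upper_const * X"
  define e where "e y = exp (\<i> * of_real (\<tau> * sqrt (\<psi>\<^sup>2 * (y\<^sup>2 + \<rho>) + m) + c * y))" for y
  define g where "g y = \<theta> (q * sqrt (y\<^sup>2 + \<rho>)) / sqrt (\<psi>\<^sup>2 * (y\<^sup>2 + \<rho>) + m)" for y
  have m: "m > 0" using eps mult_pos_pos[OF psi_pos h0_pos] by (simp add: m_def)
  have L: "L > 0" using lam_lower_const_pos by (simp add: L_def X_def)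
  have sq: "(sqrt (y\<^sup>2 + \<rho>))\<^sup>2 = y\<^sup>2 + \<rho>" "0 \<le> sqrt (y\<^sup>2 + \<rho>)" for y using rho by simp_all
  have Lb: "L \<le> sqrt (\<psi>\<^sup>2 * (y\<^sup>2 + \<rho>) + m)"
    if "\<theta> (q * sqrt (y\<^sup>2 + \<rho>)) \<noteq> 0 \<or> \<theta>' (q * sqrt (y\<^sup>2 + \<rho>)) \<noteq> 0" for y
  proof -
    have "q * sqrt (y\<^sup>2 + \<rho>) \<in> {1/6..3}" using that theta_support theta'_support by blast
    then have "1/6 \<le> q * sqrt (y\<^sup>2 + \<rho>)" by simp
    from lam_radial_lower[OF eps q sq(2) this] show ?thesis by (simp add: L_def X_def m_def sq(1))
  qed
  have "\<rho> \<le> 9 * (1 / q)\<^sup>2"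
    using power_mono[OF rho_q, of 2] rho by (simp add: power_divide)
  then have Ub: "sqrt (\<psi>\<^sup>2 * (y\<^sup>2 + \<rho>) + m) \<le> U" if "y\<^sup>2 \<le> D" for y
    using lam_radial_upper[OF q, of "sqrt (y\<^sup>2 + \<rho>)" \<epsilon>] that D by (simp add: U_def X_def m_def sq(1))
  obtain g' where gd: "\<And>y. (g has_real_derivative g' y) (at y)"
    and g'c: "continuous_on UNIV g'" and g'b: "\<And>y. \<bar>g' y\<bar> \<le> M1 * q / L + M * \<psi> / L\<^sup>2"
    using line_amplitude_deriv[OF m rho q L Lb] unfolding g_def by blast
  have "norm (integral {-sqrt D..sqrt D} (\<lambda>y. e y * of_real (g y)))
      \<le> 10 / sqrt (\<tau> * \<psi>\<^sup>2 / (2 * U)) * (M / L + (sqrt D - - sqrt D) * (M1 * q / L + M * \<psi> / L\<^sup>2))"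
  proof (rule abel_summation_integral_le)
    show "continuous_on {-sqrt D..sqrt D} e" unfolding e_def by (intro continuous_intros)
    show "norm (integral {-sqrt D..u} e) \<le> 10 / sqrt (\<tau> * \<psi>\<^sup>2 / (2 * U))"
      if "u \<in> {-sqrt D..sqrt D}" for u
      unfolding e_def by (rule norm_integral_exp_line_phase_le[OF psi_pos m tau D Ub that])
    show "\<bar>g (sqrt D)\<bar> \<le> M / L" unfolding g_def using L Lb by (intro abs_theta_div_le) auto
  qed (use D gd g'b continuous_on_subset[OF g'c] in auto)
  also have "\<dots> \<le> decay_const / sqrt \<tau>"
    using line_bound_constant_le[OF q tau, of "sqrt D"] rho_q D real_sqrt_le_mono[OF D(2)]
    by (simp add: U_def L_def X_def)
  moreover have "line_integrand \<epsilon> q \<tau> \<rho> c = (\<lambda>y. e y * of_real (g y))"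
    by (rule ext) (simp only: line_integrand_def e_def g_def m_def of_real_divide)
  ultimately show ?thesis by simp
qed

lemma norm_lborel_line_integral_le:
  assumes eps: "\<epsilon>\<^sup>2 \<le> 2 * \<psi> * h0" and tau: "\<tau> > 0" and q: "q > 0"
    and D: "0 \<le> D" "D \<le> \<rho>" and w: "norm w = 1"
    and I: "I = {-sqrt D..sqrt D} \<or> I = {-sqrt D<..<sqrt D}"
  shows "norm (\<integral>y. indicator I y *\<^sub>R (w * line_integrand \<epsilon> q \<tau> \<rho> c y) \<partial>lborel)
           \<le> decay_const / sqrt \<tau>"
proof -
  have C0: "0 \<le> decay_const / sqrt \<tau>" using decay_const_nonneg tau by simp
  have key: "norm (integral {-sqrt D..sqrt D} (line_integrand \<epsilon> q \<tau> \<rho> c)) \<le> decay_const / sqrt \<tau>"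
  proof (cases "\<rho> > 0 \<and> sqrt \<rho> \<le> 3 / q")
    case True
    then show ?thesis using norm_integral_line_le[OF eps tau _ D q] by blast
  next
    case False
    then consider "D = 0" | "3 / q < sqrt \<rho>" using D by force
    then show ?thesis
    proof cases
      case 2
      \<comment> \<open>The whole line lies outside the support of \<open>\<theta>(q |\<xi>|)\<close>.\<close>
      have "line_integrand \<epsilon> q \<tau> \<rho> c = (\<lambda>_. 0)"
      proof
        fix y
        have "q * sqrt \<rho> \<le> q * sqrt (y\<^sup>2 + \<rho>)" using q by (intro mult_left_mono real_sqrt_le_mono) auto
        moreover have "3 < q * sqrt \<rho>" using 2 q by (simp add: field_simps)
        ultimately have "3 < q * sqrt (y\<^sup>2 + \<rho>)" by linarith
        then show "line_integrand \<epsilon> q \<tau> \<rho> c y = 0"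
          using theta_support by (fastforce simp: line_integrand_def)
      qed
      then show ?thesis using C0 by simp
    qed (use C0 in simp)
  qed
  show ?thesis
  proof (cases "integrable lborel (\<lambda>y. indicator I y *\<^sub>R (w * line_integrand \<epsilon> q \<tau> \<rho> c y))")
    case True
    have "(\<integral>y. indicator I y *\<^sub>R (w * line_integrand \<epsilon> q \<tau> \<rho> c y) \<partial>lborel)
        = integral UNIV (\<lambda>y. indicator I y *\<^sub>R (w * line_integrand \<epsilon> q \<tau> \<rho> c y))"
      using integral_lborel[OF True] by simp
    also have "\<dots> = integral UNIV (\<lambda>y. if y \<in> I then w * line_integrand \<epsilon> q \<tau> \<rho> c y else 0)"
      by (rule arg_cong[where f="integral UNIV"]) (auto simp: indicator_def)
    also have "\<dots> = integral I (\<lambda>y. w * line_integrand \<epsilon> q \<tau> \<rho> c y)"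
      by (simp only: integral_restrict_UNIV)
    also have "\<dots> = w * integral {-sqrt D..sqrt D} (line_integrand \<epsilon> q \<tau> \<rho> c)"
      using I by (elim disjE) (simp_all add: integral_open_interval_real)
    finally show ?thesis using key w by (simp add: norm_mult)
  qed (use C0 in \<open>simp add: not_integrable_integral_eq\<close>)
qed

section \<open>The integral over \<open>\<real>\<^sup>N\<close>\<close>

definition osc_integrand :: "real \<Rightarrow> real \<Rightarrow> real \<Rightarrow> 'a::euclidean_space \<Rightarrow> 'a \<Rightarrow> complex" where
  "osc_integrand \<epsilon> q \<tau> z \<xi> =
     exp (\<i> * of_real (\<xi> \<bullet> z)) * of_real (\<theta> (q * norm \<xi>))
     * exp (\<i> * of_real (\<tau> * lam \<psi> h0 \<epsilon> \<xi>)) / of_real (lam \<psi> h0 \<epsilon> \<xi>)"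

lemma lam_pos:
  assumes "\<epsilon>\<^sup>2 \<le> 2 * \<psi> * h0"
  shows "0 < lam \<psi> h0 \<epsilon> \<xi>"
proof -
  have "0 < \<psi> * h0 - \<epsilon>\<^sup>2 / 4" using assms mult_pos_pos[OF psi_pos h0_pos] by linarith
  then show ?thesis unfolding lam_eq by (simp add: add_nonneg_pos)
qed

lemma osc_integrand_eq_0:
  assumes "q > 0" and "3 / q < norm \<xi>"
  shows "osc_integrand \<epsilon> q \<tau> z \<xi> = 0"
proof -
  have "3 < q * norm \<xi>" using assms by (simp add: field_simps)
  then show ?thesis using theta_support by (fastforce simp: osc_integrand_def)
qed

lemma integrable_osc_integrand:
  assumes eps: "\<epsilon>\<^sup>2 \<le> 2 * \<psi> * h0" and q: "q > 0"
  shows "integrable lborel (osc_integrand \<epsilon> q \<tau> z)"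
proof -
  have "continuous_on UNIV (lam \<psi> h0 \<epsilon> :: 'a \<Rightarrow> real)"
    unfolding lam_def by (intro continuous_intros)
  moreover have "lam \<psi> h0 \<epsilon> \<xi> \<noteq> 0" for \<xi> :: 'a using lam_pos[OF eps, of \<xi>] by simp
  ultimately have cont: "continuous_on UNIV (osc_integrand \<epsilon> q \<tau> z)"
    unfolding osc_integrand_def
    by (intro continuous_intros continuous_on_compose2[OF theta_cont]) auto
  have "integrable lborel (\<lambda>\<xi>. indicator (cball 0 (3 / q)) \<xi> *\<^sub>R osc_integrand \<epsilon> q \<tau> z \<xi>)"
    by (rule borel_integrable_compact[OF compact_cball continuous_on_subset[OF cont]]) auto
  moreover have "(\<lambda>\<xi>. indicator (cball 0 (3 / q)) \<xi> *\<^sub>R osc_integrand \<epsilon> q \<tau> z \<xi>) = osc_integrand \<epsilon> q \<tau> z"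
    using osc_integrand_eq_0[OF q] by (force simp: indicator_def)
  ultimately show ?thesis by simp
qed

text \<open>The estimate of \<open>I\<^sub>1\<^sub>,\<^sub>k\<close> without oscillation: the integrand is bounded by
  \<open>M / \<lambda>\<close> and supported in the cube of side \<open>6 / q\<close>.\<close>

lemma norm_integral_osc_le_support:
  assumes eps: "\<epsilon>\<^sup>2 \<le> 2 * \<psi> * h0" and q: "q > 0"
  shows "norm (integral UNIV (osc_integrand \<epsilon> q \<tau> z :: 'a::euclidean_space \<Rightarrow> complex))
           \<le> M / (lam_lower_const * max 1 (1 / q)) * (6 / q) ^ DIM('a)"
proof -
  define K where "K = M / (lam_lower_const * max 1 (1 / q))"
  define R where "R = 3 / q"
  define a :: 'a where "a = - (R *\<^sub>R One)"
  define box where "box = cbox a (a + (2 * R) *\<^sub>R One)"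
  have R0: "R > 0" using q by (simp add: R_def)
  have K0: "0 \<le> K"
    using M_nonneg lam_lower_const_pos by (simp add: K_def)
  have "Henstock_Kurzweil_Integration.content box = (2 * R) ^ DIM('a)"
    unfolding box_def using R0 by (simp add: content_cbox_plus)
  moreover have "((\<lambda>\<xi>. if \<xi> \<in> box then K else 0) has_integral Henstock_Kurzweil_Integration.content box *\<^sub>R K) UNIV"
    unfolding has_integral_restrict_UNIV box_def by (rule has_integral_const)
  ultimately have gint: "((\<lambda>\<xi>. if \<xi> \<in> box then K else 0) has_integral (2 * R) ^ DIM('a) * K) UNIV"
    by simp
  have bound: "norm (osc_integrand \<epsilon> q \<tau> z \<xi>) \<le> (if \<xi> \<in> box then K else 0)" for \<xi>
  proof (cases "\<xi> \<in> box")
    case False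
    then obtain i where i: "i \<in> Basis" "\<not> (a \<bullet> i \<le> \<xi> \<bullet> i \<and> \<xi> \<bullet> i \<le> (a + (2 * R) *\<^sub>R One) \<bullet> i)"
      unfolding box_def mem_box by blast
    moreover have "a \<bullet> i = - R" "(a + (2 * R) *\<^sub>R One) \<bullet> i = R"
      using i(1) by (simp_all add: a_def inner_add_left inner_diff_left)
    ultimately have "R < \<bar>\<xi> \<bullet> i\<bar>" by auto
    then have "R < norm \<xi>" using Basis_le_norm[OF i(1), of \<xi>] by linarith
    then show ?thesis using False osc_integrand_eq_0[OF q] by (simp add: R_def)
  next
    case True
    have "\<bar>\<theta> (q * norm \<xi>) / lam \<psi> h0 \<epsilon> \<xi>\<bar> \<le> K"
      unfolding K_def lam_eq
      using theta_support q by (intro abs_theta_div_le lam_radial_lower[OF eps q])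
        (auto simp: lam_lower_const_pos)
    then show ?thesis using True lam_pos[OF eps, of \<xi>]
      by (simp add: osc_integrand_def norm_mult norm_divide abs_divide)
  qed
  have "norm (integral UNIV (osc_integrand \<epsilon> q \<tau> z)) \<le> (2 * R) ^ DIM('a) * K"
    using integral_norm_bound_integral[OF integrable_on_lborel[OF integrable_osc_integrand[OF eps q]]
        has_integral_integrable[OF gint] bound] integral_unique[OF gint] by simp
  then show ?thesis by (simp add: K_def R_def mult.commute)
qed

lemma osc_integrand_along_Basis:
  assumes "b \<in> Basis" and "\<eta> \<bullet> b = 0"
  shows "osc_integrand \<epsilon> q \<tau> z (\<eta> + y *\<^sub>R b)
    = exp (\<i> * of_real (\<eta> \<bullet> z)) * line_integrand \<epsilon> q \<tau> ((norm \<eta>)\<^sup>2) (b \<bullet> z) y"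
proof -
  have n2: "(norm (\<eta> + y *\<^sub>R b))\<^sup>2 = y\<^sup>2 + (norm \<eta>)\<^sup>2"
    using norm_add_scaleR_Basis_sq[OF assms] by simp
  have n: "norm (\<eta> + y *\<^sub>R b) = sqrt (y\<^sup>2 + (norm \<eta>)\<^sup>2)"
    using n2 by (metis norm_ge_zero real_sqrt_unique)
  show ?thesis
    unfolding osc_integrand_def line_integrand_def lam_eq n2 n
    by (simp add: inner_add_left exp_add[symmetric] distrib_left mult.commute mult.left_commute add_ac)
qed

lemma norm_integral_osc_restrict_le:
  fixes S :: "'a::euclidean_space set" and b :: 'a
  assumes eps: "\<epsilon>\<^sup>2 \<le> 2 * \<psi> * h0" and tau: "\<tau> > 0" and q: "q > 0"
    and b: "b \<in> Basis" and S: "S \<in> sets lborel"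
    and lines: "\<And>\<eta>. \<eta> \<bullet> b = 0 \<Longrightarrow> \<exists>D. 0 \<le> D \<and> D \<le> (norm \<eta>)\<^sup>2 \<and>
        ((\<lambda>y. \<eta> + y *\<^sub>R b) -` S = {-sqrt D..sqrt D} \<or> (\<lambda>y. \<eta> + y *\<^sub>R b) -` S = {-sqrt D<..<sqrt D})"
  shows "norm (integral UNIV (\<lambda>\<xi>. indicator S \<xi> *\<^sub>R osc_integrand \<epsilon> q \<tau> z \<xi>))
           \<le> decay_const / sqrt \<tau> * (6 / q) ^ (DIM('a) - 1)"
proof -
  define F where "F = (\<lambda>\<xi>. indicator S \<xi> *\<^sub>R osc_integrand \<epsilon> q \<tau> z \<xi>)"
  have Fi: "integrable lborel F"
    unfolding F_def by (rule integrable_mult_indicator[OF S integrable_osc_integrand[OF eps q]])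
  have "norm (integral UNIV F) \<le> decay_const / sqrt \<tau> * (2 * (3 / q)) ^ (DIM('a) - 1)"
  proof (rule norm_integral_le_by_lines[OF Fi b])
    show "0 \<le> decay_const / sqrt \<tau>" using decay_const_nonneg tau by simp
    show "0 \<le> 3 / q" using q by simp
  next
    fix x :: "'a \<Rightarrow> real"
    define \<eta> where "\<eta> = (\<Sum>c\<in>Basis - {b}. x c *\<^sub>R c)"
    have \<eta>b: "\<eta> \<bullet> b = 0" using b inner_sum_Basis_remove[where b'=b and b=b and x=x] by (simp add: \<eta>_def)
    obtain D where D: "0 \<le> D" "D \<le> (norm \<eta>)\<^sup>2"
      and I: "(\<lambda>y. \<eta> + y *\<^sub>R b) -` S = {-sqrt D..sqrt D} \<or> (\<lambda>y. \<eta> + y *\<^sub>R b) -` S = {-sqrt D<..<sqrt D}"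
      using lines[OF \<eta>b] by blast
    have "F (\<eta> + y *\<^sub>R b) = indicator ((\<lambda>y. \<eta> + y *\<^sub>R b) -` S) y
        *\<^sub>R (exp (\<i> * of_real (\<eta> \<bullet> z)) * line_integrand \<epsilon> q \<tau> ((norm \<eta>)\<^sup>2) (b \<bullet> z) y)" for y
      by (simp add: F_def osc_integrand_along_Basis[OF b \<eta>b] indicator_def)
    then show "norm (\<integral>y. F ((\<Sum>c\<in>Basis - {b}. x c *\<^sub>R c) + y *\<^sub>R b) \<partial>lborel) \<le> decay_const / sqrt \<tau>"
      using norm_lborel_line_integral_le[OF eps tau q D _ I] by (simp add: \<eta>_def[symmetric])
  next
    fix x :: "'a \<Rightarrow> real" and c
    assume c: "c \<in> Basis - {b}" "3 / q < \<bar>x c\<bar>"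
    have "((\<Sum>c\<in>Basis - {b}. x c *\<^sub>R c) + y *\<^sub>R b) \<bullet> c = x c" for y
      using c b inner_sum_Basis_remove[where b'=c and b=b and x=x] by (auto simp: inner_add_left inner_Basis)
    then have "3 / q < norm ((\<Sum>c\<in>Basis - {b}. x c *\<^sub>R c) + y *\<^sub>R b)" for y
      using c Basis_le_norm[of c "(\<Sum>c\<in>Basis - {b}. x c *\<^sub>R c) + y *\<^sub>R b"] by fastforce
    then have "(\<lambda>y. F ((\<Sum>c\<in>Basis - {b}. x c *\<^sub>R c) + y *\<^sub>R b)) = (\<lambda>_. 0)"
      unfolding F_def using osc_integrand_eq_0[OF q] by fastforce
    then show "(\<integral>y. F ((\<Sum>c\<in>Basis - {b}. x c *\<^sub>R c) + y *\<^sub>R b) \<partial>lborel) = 0"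
      by simp
  qed
  then show ?thesis by (simp add: F_def)
qed

text \<open>Split \<open>\<real>\<^sup>N\<close> into the cone \<open>A\<close> where \<open>\<xi>\<^sub>1\<close> is not dominant and its complement. Lines in
  direction \<open>b\<^sub>1\<close> meet \<open>A\<close> in \<open>|y| \<le> |\<eta>|\<close>, lines in direction \<open>b\<^sub>2\<close> meet the complement in
  \<open>|y| < |\<eta>|\<close>: in both cases the segment is one where the phase is uniformly convex.\<close>

lemma norm_integral_osc_decay:
  assumes dim: "DIM('a::euclidean_space) \<ge> 2"
    and eps: "\<epsilon>\<^sup>2 \<le> 2 * \<psi> * h0" and tau: "\<tau> > 0" and q: "q > 0"
  shows "norm (integral UNIV (osc_integrand \<epsilon> q \<tau> z :: 'a \<Rightarrow> complex))
           \<le> 2 * (decay_const / sqrt \<tau>) * (6 / q) ^ (DIM('a) - 1)"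
proof -
  have "\<not> card (Basis :: 'a set) \<le> Suc 0" using dim by simp
  then obtain b1 b2 :: 'a where b: "b1 \<in> Basis" "b2 \<in> Basis" "b1 \<noteq> b2"
    using card_le_Suc0_iff_eq[OF finite_Basis] by blast
  define A where "A = {\<xi>::'a. 2 * (\<xi> \<bullet> b1)\<^sup>2 \<le> (norm \<xi>)\<^sup>2}"
  have "closed A" unfolding A_def by (intro closed_Collect_le continuous_intros)
  then have A: "A \<in> sets lborel" "- A \<in> sets lborel" by (auto intro: borel_closed)
  define F where "F = osc_integrand \<epsilon> q \<tau> z"
  have int: "integrable lborel (\<lambda>\<xi>. indicator S \<xi> *\<^sub>R F \<xi>)" if "S \<in> sets lborel" for S
    unfolding F_def by (rule integrable_mult_indicator[OF that integrable_osc_integrand[OF eps q]])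
  have "(\<lambda>\<xi>. indicator A \<xi> *\<^sub>R F \<xi> + indicator (- A) \<xi> *\<^sub>R F \<xi>) = F"
    by (auto simp: indicator_def fun_eq_iff)
  with integral_add[OF integrable_on_lborel[OF int[OF A(1)]] integrable_on_lborel[OF int[OF A(2)]]]
  have split: "integral UNIV F
      = integral UNIV (\<lambda>\<xi>. indicator A \<xi> *\<^sub>R F \<xi>) + integral UNIV (\<lambda>\<xi>. indicator (- A) \<xi> *\<^sub>R F \<xi>)"
    by simp
  have "norm (integral UNIV (\<lambda>\<xi>. indicator A \<xi> *\<^sub>R F \<xi>)) \<le> decay_const / sqrt \<tau> * (6 / q) ^ (DIM('a) - 1)"
    unfolding F_def
  proof (rule norm_integral_osc_restrict_le[OF eps tau q b(1) A(1)])
    fix \<eta> :: 'a assume "\<eta> \<bullet> b1 = 0"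
    then have "(\<lambda>y. \<eta> + y *\<^sub>R b1) -` A = {-sqrt ((norm \<eta>)\<^sup>2)..sqrt ((norm \<eta>)\<^sup>2)}"
      unfolding A_def by (rule line_preimage_cone[OF b(1)])
    then show "\<exists>D. 0 \<le> D \<and> D \<le> (norm \<eta>)\<^sup>2
        \<and> ((\<lambda>y. \<eta> + y *\<^sub>R b1) -` A = {-sqrt D..sqrt D} \<or> (\<lambda>y. \<eta> + y *\<^sub>R b1) -` A = {-sqrt D<..<sqrt D})"
      by (intro exI[of _ "(norm \<eta>)\<^sup>2"]) simp
  qed
  moreover have "norm (integral UNIV (\<lambda>\<xi>. indicator (- A) \<xi> *\<^sub>R F \<xi>))
      \<le> decay_const / sqrt \<tau> * (6 / q) ^ (DIM('a) - 1)"
    unfolding F_def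
  proof (rule norm_integral_osc_restrict_le[OF eps tau q b(2) A(2)])
    fix \<eta> :: 'a assume "\<eta> \<bullet> b2 = 0"
    then obtain D where "0 \<le> D" "D \<le> (norm \<eta>)\<^sup>2" "(\<lambda>y. \<eta> + y *\<^sub>R b2) -` (- A) = {-sqrt D<..<sqrt D}"
      unfolding A_def by (rule line_preimage_cone_complement[OF b])
    then show "\<exists>D. 0 \<le> D \<and> D \<le> (norm \<eta>)\<^sup>2
        \<and> ((\<lambda>y. \<eta> + y *\<^sub>R b2) -` (- A) = {-sqrt D..sqrt D} \<or> (\<lambda>y. \<eta> + y *\<^sub>R b2) -` (- A) = {-sqrt D<..<sqrt D})"
      by blast
  qed
  ultimately have "norm (integral UNIV F)
      \<le> decay_const / sqrt \<tau> * (6 / q) ^ (DIM('a) - 1) + decay_const / sqrt \<tau> * (6 / q) ^ (DIM('a) - 1)"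
    unfolding split using norm_triangle_ineq[of "integral UNIV (\<lambda>\<xi>. indicator A \<xi> *\<^sub>R F \<xi>)"
        "integral UNIV (\<lambda>\<xi>. indicator (- A) \<xi> *\<^sub>R F \<xi>)"] by linarith
  then show ?thesis by (simp add: F_def)
qed

lemma I1k_eq_osc_integral:
  fixes z :: "real ^ 'n"
  assumes eps: "0 < \<epsilon>" "\<epsilon>\<^sup>2 \<le> 2 * \<psi> * h0"
  shows "I1k \<psi> h0 \<theta> \<epsilon> k t \<tau> z
    = integral UNIV (osc_integrand \<epsilon> (2 powr - real_of_int k) \<tau> z)
      * (of_real (exp (- t / 2)) * of_real \<epsilon> / (2 * \<i>))"
proof -
  define q where "q = (2::real) powr - real_of_int k"
  define c0 where "c0 = complex_of_real (exp (- t / 2)) * of_real \<epsilon> / (2 * \<i>)"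
  have "I1k \<psi> h0 \<theta> \<epsilon> k t \<tau> z = integral UNIV (\<lambda>\<xi>. osc_integrand \<epsilon> q \<tau> z \<xi> * c0)"
    unfolding I1k_def
  proof (intro arg_cong[where f="integral UNIV"] ext)
    fix \<xi> :: "real ^ 'n"
    have lam: "complex_of_real (lam \<psi> h0 \<epsilon> \<xi>) \<noteq> 0" using lam_pos[OF eps(2), of \<xi>] by simp
    have diff: "lam_plus \<psi> h0 \<epsilon> \<xi> - lam_minus \<psi> h0 \<epsilon> \<xi>
        = 2 * (\<i> / of_real \<epsilon>) * of_real (lam \<psi> h0 \<epsilon> \<xi>)"
      by (simp add: lam_plus_def lam_minus_def)
    show "exp (\<i> * complex_of_real (\<xi> \<bullet> z)) * complex_of_real (\<theta> (2 powr - real_of_int k * norm \<xi>))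
        * (complex_of_real (exp (- t / 2)) * exp (\<i> * complex_of_real (\<tau> * lam \<psi> h0 \<epsilon> \<xi>)))
        / (lam_plus \<psi> h0 \<epsilon> \<xi> - lam_minus \<psi> h0 \<epsilon> \<xi>) = osc_integrand \<epsilon> q \<tau> z \<xi> * c0"
      unfolding diff osc_integrand_def c0_def q_def using lam eps(1) by (simp add: field_simps)
  qed
  then show ?thesis by (simp add: integral_mult_left q_def c0_def)
qed

definition osc_const :: "nat \<Rightarrow> real" where
  "osc_const N = max (M * 6 ^ N / lam_lower_const) (2 * decay_const * 6 ^ (N - 1)) + 1"

lemma osc_const_pos: "0 < osc_const N"
proof -
  have "0 \<le> M * 6 ^ N / lam_lower_const" using M_nonneg lam_lower_const_pos by simp
  then show ?thesis unfolding osc_const_def by linarith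
qed

lemma norm_integral_osc_le_scaled_volume:
  assumes dim: "DIM('a::euclidean_space) \<ge> 1" and eps: "\<epsilon>\<^sup>2 \<le> 2 * \<psi> * h0" and P: "0 < P"
  shows "norm (integral UNIV (osc_integrand \<epsilon> (1 / P) \<tau> z :: 'a \<Rightarrow> complex))
    \<le> 2 * osc_const DIM('a) * (P ^ (DIM('a) - 1) * max 1 (1 / P)) * (P / (P + 1))"
proof -
  define N where "N = DIM('a)"
  define C where "C = osc_const N"
  define X where "X = max 1 P"
  have X0: "X > 0" by (simp add: X_def)
  have "norm (integral UNIV (osc_integrand \<epsilon> (1 / P) \<tau> z :: 'a \<Rightarrow> complex))
      \<le> M / (lam_lower_const * max 1 P) * (6 * P) ^ N"
    using norm_integral_osc_le_support[OF eps, of "1 / P" \<tau> z] P by (simp add: N_def)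
  also have "\<dots> = (M * 6 ^ N / lam_lower_const) * (P ^ N / X)"
    using lam_lower_const_pos X0 by (simp add: X_def power_mult_distrib field_simps)
  also have "\<dots> \<le> C * (P ^ N / X)"
    using P X0 by (intro mult_right_mono) (auto simp: C_def osc_const_def)
  also have "\<dots> \<le> C * P ^ N * (2 * max 1 (1 / P) / (P + 1))"
  proof -
    have "P + 1 \<le> 2 * X * 1" by (simp add: X_def)
    also have "\<dots> \<le> 2 * X * max 1 (1 / P)" using X0 by (intro mult_left_mono) auto
    finally have "P + 1 \<le> 2 * X * max 1 (1 / P)" .
    then have "1 / X \<le> 2 * max 1 (1 / P) / (P + 1)" using X0 P by (simp add: field_simps)
    then show ?thesis using osc_const_pos P by (simp add: C_def mult_left_mono divide_inverse)
  qed
  also have "\<dots> = 2 * C * (P ^ (N - 1) * max 1 (1 / P)) * (P / (P + 1))"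
    using dim P by (simp add: N_def power_eq_if field_simps)
  finally show ?thesis by (simp add: C_def N_def)
qed

lemma norm_integral_osc_le_decay_scaled:
  assumes dim: "DIM('a::euclidean_space) \<ge> 2"
    and eps: "\<epsilon>\<^sup>2 \<le> 2 * \<psi> * h0" and tau: "\<tau> > 0" and P: "0 < P"
  shows "norm (integral UNIV (osc_integrand \<epsilon> (1 / P) \<tau> z :: 'a \<Rightarrow> complex))
    \<le> 2 * osc_const DIM('a) * (P ^ (DIM('a) - 1) * max 1 (1 / P)) * (1 / sqrt \<tau>)"
proof -
  define N where "N = DIM('a)"
  have "norm (integral UNIV (osc_integrand \<epsilon> (1 / P) \<tau> z :: 'a \<Rightarrow> complex))
      \<le> 2 * (decay_const / sqrt \<tau>) * (6 * P) ^ (N - 1)"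
    using norm_integral_osc_decay[OF dim eps tau, of "1 / P" z] P by (simp add: N_def)
  also have "\<dots> = (2 * decay_const * 6 ^ (N - 1)) * P ^ (N - 1) * (1 / sqrt \<tau>)"
    by (simp add: power_mult_distrib)
  also have "\<dots> \<le> osc_const N * P ^ (N - 1) * (1 / sqrt \<tau>)"
    using P tau by (intro mult_right_mono) (auto simp: osc_const_def)
  also have "\<dots> \<le> 2 * osc_const N * (P ^ (N - 1) * max 1 (1 / P)) * (1 / sqrt \<tau>)"
    using osc_const_pos[of N] P tau
    by (intro mult_right_mono) (auto intro!: mult_left_mono order.trans[OF _ mult_left_mono[of 1]])
  finally show ?thesis by (simp add: N_def)
qed

lemma norm_integral_osc_le:
  assumes dim: "DIM('a::euclidean_space) \<ge> 2"
    and eps: "\<epsilon>\<^sup>2 \<le> 2 * \<psi> * h0" and tau: "\<tau> > 0" and P: "0 < P"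
  shows "norm (integral UNIV (osc_integrand \<epsilon> (1 / P) \<tau> z :: 'a \<Rightarrow> complex))
    \<le> 2 * osc_const DIM('a) * (P ^ (DIM('a) - 1) * max 1 (1 / P)) * min (P / (P + 1)) (1 / sqrt \<tau>)"
proof (cases "P / (P + 1) \<le> 1 / sqrt \<tau>")
  case True
  then show ?thesis using norm_integral_osc_le_scaled_volume[of \<epsilon> P \<tau> z] dim eps P
    by (simp add: min_def)
next
  case False
  then show ?thesis using norm_integral_osc_le_decay_scaled[OF dim eps tau P, of z]
    by (simp add: min_def)
qed

end

lemma smooth_cutoff_symbol:
  fixes \<theta> :: "real \<Rightarrow> real"
  assumes "0 < \<psi>" "0 < h0" and smooth: "smooth_real \<theta>"
    and supp: "closure {x. \<theta> x \<noteq> 0} \<subseteq> {1/6..3}"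
  obtains M M1 where "cutoff_symbol \<psi> h0 \<theta> (deriv \<theta>) M M1"
proof -
  have diff0: "\<theta> differentiable (at x)" and diff1: "deriv \<theta> differentiable (at x)" for x
    using smooth[unfolded smooth_real_def, rule_format, of 0 x] smooth[unfolded smooth_real_def, rule_format, of 1 x]
    by simp_all
  have deriv: "(\<theta> has_real_derivative deriv \<theta> x) (at x)" for x
    using diff0 DERIV_deriv_iff_real_differentiable by blast
  have cont: "continuous_on UNIV \<theta>" "continuous_on UNIV (deriv \<theta>)"
    by (intro continuous_at_imp_continuous_on ballI differentiable_imp_continuous_within diff0 diff1)+
  have supp0: "x \<in> {1/6..3}" if "\<theta> x \<noteq> 0" for x
    using that by (intro subsetD[OF supp] subsetD[OF closure_subset]) simp
  have supp1: "x \<in> {1/6..3}" if "deriv \<theta> x \<noteq> 0" for x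
  proof (rule ccontr)
    assume x: "x \<notin> {1/6..3}"
    have "\<theta> y = 0" if "y \<in> - {1/6..3}" for y using supp0[of y] that by auto
    then have "((\<lambda>_. 0) has_real_derivative deriv \<theta> x) (at x)"
      using x by (intro has_field_derivative_transform_within_open[OF deriv, of "- {1/6..3}"]) auto
    then show False using that DERIV_const DERIV_unique by blast
  qed
  have bounded: "\<exists>B. \<forall>x. \<bar>f x\<bar> \<le> B"
    if "continuous_on UNIV f" "\<And>x. f x \<noteq> 0 \<Longrightarrow> x \<in> {1/6..3}" for f :: "real \<Rightarrow> real"
  proof -
    have "compact (f ` {1/6..3})"
      by (rule compact_continuous_image[OF continuous_on_subset[OF that(1)]]) auto
    then obtain B where B: "\<forall>y\<in>f ` {1/6..3}. norm y \<le> B"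
      using compact_imp_bounded bounded_iff by blast
    have "\<bar>f x\<bar> \<le> max B 0" for x
    proof (cases "f x = 0")
      case False
      then have "x \<in> {1/6..3}" by (rule that(2))
      then have "\<bar>f x\<bar> \<le> B" using B by auto
      then show ?thesis by linarith
    qed simp
    then show ?thesis by blast
  qed
  obtain M M1 where "\<And>x. \<bar>\<theta> x\<bar> \<le> M" "\<And>x. \<bar>deriv \<theta> x\<bar> \<le> M1"
    using bounded[OF cont(1) supp0] bounded[OF cont(2) supp1] by blast
  then have "cutoff_symbol \<psi> h0 \<theta> (deriv \<theta>) M M1"
    using assms(1,2) deriv cont(2) supp0 supp1 by unfold_locales auto
  then show ?thesis by (rule that)
qed

theorem lemma5p1:
  fixes psi h0 :: real and \<theta> :: "real \<Rightarrow> real"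
  assumes "CARD('n::finite) \<ge> 2"
    and "psi > 0" and "h0 > 0"
    and "smooth_real \<theta>"
    and "closure {x. \<theta> x \<noteq> 0} \<subseteq> {1/6..3}"
    and "\<forall>x\<in>{5/6..12/5}. \<theta> x = 1"
  shows "\<exists>C>0. \<forall>k::int. \<exists>eps0>0. \<forall>eps. 0 < eps \<and> eps < eps0 \<longrightarrow>
     (\<forall>t\<ge>0. \<forall>tau>0. \<forall>z::real ^ 'n.
        cmod (I1k psi h0 \<theta> eps k t tau z)
        \<le> eps * C * 2 powr ((real CARD('n) - 1) * real_of_int k)
            * max 1 (2 powr (- real_of_int k)) * exp (- t / 2)
            * min (2 powr real_of_int k / (2 powr real_of_int k + 1)) (tau powr (- 1/2)))"
proof -
  obtain M M1 where "cutoff_symbol psi h0 \<theta> (deriv \<theta>) M M1"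
    using smooth_cutoff_symbol[OF assms(2-5)] .
  then interpret cutoff_symbol psi h0 \<theta> "deriv \<theta>" M M1 .
  define C where "C = osc_const CARD('n)"
  have bound: "cmod (I1k psi h0 \<theta> eps k t tau z)
        \<le> eps * C * 2 powr ((real CARD('n) - 1) * real_of_int k)
            * max 1 (2 powr (- real_of_int k)) * exp (- t / 2)
            * min (2 powr real_of_int k / (2 powr real_of_int k + 1)) (tau powr (- 1/2))"
    if eps: "0 < eps" "eps < sqrt (2 * psi * h0)" and tau: "0 < tau" for eps t tau k and z :: "real ^ 'n"
  proof -
    define P where "P = (2::real) powr real_of_int k"
    have P: "0 < P" "2 powr - real_of_int k = 1 / P" by (simp_all add: P_def powr_minus_divide)
    have eps2: "eps\<^sup>2 \<le> 2 * psi * h0"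
      using power_mono[OF less_imp_le[OF eps(2)], of 2] eps assms(2,3) by simp
    have "2 powr ((real CARD('n) - 1) * real_of_int k) = P ^ (CARD('n) - 1)"
      using assms(1) by (simp add: P_def powr_powr[symmetric] powr_realpow[symmetric] of_nat_diff mult.commute)
    moreover have "tau powr (- 1/2) = 1 / sqrt tau"
      using tau by (simp add: powr_minus_divide powr_half_sqrt)
    moreover have "norm (integral UNIV (osc_integrand eps (1 / P) tau z))
        \<le> 2 * C * (P ^ (CARD('n) - 1) * max 1 (1 / P)) * min (P / (P + 1)) (1 / sqrt tau)"
      using norm_integral_osc_le[of eps tau P z] assms(1) eps2 tau P by (simp add: C_def)
    ultimately show ?thesis
      using I1k_eq_osc_integral[OF eps(1) eps2, of k t tau z] eps(1) P
      by (simp add: norm_mult norm_divide P_def mult_ac)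
  qed
  show ?thesis
  proof (rule exI[of _ C], intro conjI allI)
    show "0 < C" using osc_const_pos by (simp add: C_def)
    show "\<exists>eps0>0. \<forall>eps. 0 < eps \<and> eps < eps0 \<longrightarrow> (\<forall>t\<ge>0. \<forall>tau>0. \<forall>z::real ^ 'n.
        cmod (I1k psi h0 \<theta> eps k t tau z)
        \<le> eps * C * 2 powr ((real CARD('n) - 1) * real_of_int k)
            * max 1 (2 powr (- real_of_int k)) * exp (- t / 2)
            * min (2 powr real_of_int k / (2 powr real_of_int k + 1)) (tau powr (- 1/2)))" for k
      using bound assms(2,3) by (intro exI[of _ "sqrt (2 * psi * h0)"]) auto
  qed
qed

end
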